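(* In the setting where delays are available at action time, the expected regret of Skipper$(\beta,\mathrm{DEW}(\eta,\beta))$ tuned by the scheme Doubling (see context) satisfies, for every $T$ and without prior knowledge of $T$ or $D$, $$\bar{\mathcal R}_T\le 15\min_{\beta>0}\left\{|S_\beta|+4e\beta\ln K+\frac{KT+D_\beta}{4e\beta}\right\}+10e^2K\ln K+5.$$
   Context: Setting: fix integers $K\ge 2$, $T\ge 1$, $[K]=\{1,\dots,K\}$. An oblivious adversary fixes in advance losses $\ell_t^a\in[0,1]$ and nonnegative integer delays $d_t$. In each round $t$ the delay $d_t$ is revealed to the learner at the beginning of the round (delay available at action time); the learner then picks (possibly at random) $A_t\in[K]$, suffers $\ell_t^{A_t}$, and at the end of round $t$ observes the pairs $(s,\ell_s^{A_s})$ for all $s\le t$ with $s+d_s=t$. Expected regret: $\bar{\mathcal R}_T=\mathbb E[\sum_{t=1}^T\ell_t^{A_t}]-\min_a\sum_{t=1}^T\ell_t^a$. $D=\sum_{t=1}^Td_t$, $S_\beta=\{t\in[T]:d_t\ge\beta\}$, $D_\beta=\sum_{t\in[T]\setminus S_\beta}d_t$. Algorithm DEW with inputs $\eta>0$ and $d_{\max}$: $\eta'=\min\{\eta,(4e\,d_{\max})^{-1}\}$, $w_0^a=1$; in round $t$ play $A_t\sim p_t$ with $p_t^a=w_{t-1}^a/\sum_b w_{t-1}^b$; at the end of the round, for each received pair $(s,\ell_s^{A_s})$ form $\hat\ell_s^a=\ell_s^a\mathbb 1(a=A_s)/p_s^a$ and update $w_t^a=w_{t-1}^a\exp(-\eta'\sum_s\hat\ell_s^a)$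 (sum over pairs received in round $t$). Skipper$(\beta,\mathcal A)$ plays the actions of the base algorithm $\mathcal A$ and forwards to $\mathcal A$ only the pairs $(s,\ell_s^{A_s})$ with $d_s<\beta$. Skipper$(\beta,\mathrm{DEW}(\eta,\beta))$ uses DEW with learning rate $\eta$ and $d_{\max}=\beta$. Doubling: rounds are partitioned into consecutive epochs indexed by $m$, with $\omega_m=2^m$, $\beta_m=\sqrt{\omega_m}/(4e\ln K)$ and $\eta_m=1/(4e\beta_m)$; in each epoch a fresh copy of Skipper$(\beta_m,\mathrm{DEW}(\eta_m,\beta_m))$ is run. For epoch $m$ let $\sigma(m)$ be its number of rounds, $S^m_\beta$ the set of its rounds with $d_t\ge\beta$, and $D^m_\beta$ the sum of $d_t$ over its rounds with $d_t<\beta$. At the beginning of each round $t$, after $d_t$ is revealed, the algorithm stays in the current epoch $m$ if, with round $t$ included in epoch $m$, $$\max\Big\{|S^m_{\beta_m}|^2,\ \Big(\tfrac{eK\sigma(m)}{2}+D^m_{\beta_m}\Big)\ln K\Big\}\le\omega_m;$$ otherwise a new epoch (with a larger index) is started at round $t$, before $A_t$ is selected. *)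

theory Defs
  imports Complex_Main
begin

text \<open>Rounds are indexed 1,2,...; actions are 1..K.  The losses are
  l :: nat => nat => real (l t a = loss of action a in round t) and the delays
  d :: nat => nat.  Both are fixed in advance (oblivious adversary).\<close>

definition omega :: "nat \<Rightarrow> real" where
  "omega m = 2 ^ m"

definition beta :: "nat \<Rightarrow> nat \<Rightarrow> real" where
  "beta K m = sqrt (omega m) / (4 * exp 1 * ln (real K))"

definition eta :: "nat \<Rightarrow> nat \<Rightarrow> real" where
  "eta K m = 1 / (4 * exp 1 * beta K m)"

text \<open>Stay condition of Doubling: epoch with index m consisting of the rounds r..t.\<close>
definition stay_cond :: "nat \<Rightarrow> (nat \<Rightarrow> nat) \<Rightarrow> nat \<Rightarrow> nat \<Rightarrow> nat \<Rightarrow> bool" where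
  "stay_cond K d m r t \<longleftrightarrow>
     max ((real (card {s \<in> {r..t}. beta K m \<le> real (d s)})) ^ 2)
         ((exp 1 * real K * real (t + 1 - r) / 2
            + (\<Sum>s\<in>{s \<in> {r..t}. real (d s) < beta K m}. real (d s))) * ln (real K))
       \<le> omega m"

text \<open>epoch K d t = (m, r): the round t (t >= 1) belongs to the epoch with index m,
  which started at round r.  The first epoch starts at round 1 (with the least index
  for which the stay condition holds; starting from index 0 this is what the
  restart rule produces, as index 0 always fails for K >= 2).  The value at t = 0
  is a dummy.\<close>
fun epoch :: "nat \<Rightarrow> (nat \<Rightarrow> nat) \<Rightarrow> nat \<Rightarrow> nat \<times> nat" where
  "epoch K d 0 = (0, 1)"
| "epoch K d (Suc t) =
     (if t = 0 then (LEAST m. stay_cond K d m 1 1, 1)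
      else (let (m, r) = epoch K d t in
            if stay_cond K d m r (Suc t) then (m, r)
            else (LEAST m'. m < m' \<and> stay_cond K d m' (Suc t) (Suc t), Suc t)))"

text \<open>Feedback forwarded by Skipper to the current DEW copy before round t = length h + 1,
  where h = [A_1, ..., A_{t-1}] is the history of played actions: pairs of rounds s
  of the current epoch (s >= r), with d_s < beta_m, whose feedback arrived at the end of
  some round s + d_s <= t - 1.\<close>
definition received :: "nat \<Rightarrow> (nat \<Rightarrow> nat) \<Rightarrow> nat list \<Rightarrow> nat set" where
  "received K d h =
     (let (m, r) = epoch K d (length h + 1)
      in {s. 1 \<le> s \<and> r \<le> s \<and> s + d s \<le> length h \<and> real (d s) < beta K m})"

text \<open>Effective DEW learning rate eta' = min(eta, 1/(4 e d_max)) with d_max = beta.\<close>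
definition eta_eff :: "nat \<Rightarrow> (nat \<Rightarrow> nat) \<Rightarrow> nat list \<Rightarrow> real" where
  "eta_eff K d h =
     (let m = fst (epoch K d (length h + 1))
      in min (eta K m) (1 / (4 * exp 1 * beta K m)))"

lemma received_lt: "s \<in> received K d h \<Longrightarrow> length (take (s - 1) h) < length h"
  unfolding received_def by (auto split: prod.splits)

lemma received_finite: "finite (received K d h)"
  unfolding received_def by (auto split: prod.splits intro: finite_subset[of _ "{..length h}"])

text \<open>pdist K d l h a = probability p_t^a that the algorithm plays a in round
  t = length h + 1, given the history h = [A_1, ..., A_{t-1}].\<close>
function pdist :: "nat \<Rightarrow> (nat \<Rightarrow> nat) \<Rightarrow> (nat \<Rightarrow> nat \<Rightarrow> real) \<Rightarrow> nat list \<Rightarrow> nat \<Rightarrow> real" where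
  "pdist K d l h a =
     (let w = (\<lambda>b. exp (- eta_eff K d h *
                  (\<Sum>s\<in>received K d h.
                     (if b = h ! (s - 1) then l s b / pdist K d l (take (s - 1) h) b else 0))))
      in w a / (\<Sum>b\<in>{1..K}. w b))"
  by pat_completeness auto
termination
  by (relation "measure (\<lambda>(K, d, l, h, a). length h)") (auto dest: received_lt)

definition exp_loss :: "nat \<Rightarrow> (nat \<Rightarrow> nat) \<Rightarrow> (nat \<Rightarrow> nat \<Rightarrow> real) \<Rightarrow> nat \<Rightarrow> real" where
  "exp_loss K d l T =
     (\<Sum>xs\<in>{xs. length xs = T \<and> set xs \<subseteq> {1..K}}.
        (\<Prod>i<T. pdist K d l (take i xs) (xs ! i)) * (\<Sum>i<T. l (i + 1) (xs ! i)))"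

definition exp_regret :: "nat \<Rightarrow> (nat \<Rightarrow> nat) \<Rightarrow> (nat \<Rightarrow> nat \<Rightarrow> real) \<Rightarrow> nat \<Rightarrow> real" where
  "exp_regret K d l T = exp_loss K d l T - (MIN a\<in>{1..K}. \<Sum>t=1..T. l t a)"

definition S_set :: "(nat \<Rightarrow> nat) \<Rightarrow> nat \<Rightarrow> real \<Rightarrow> nat set" where
  "S_set d T \<beta> = {t \<in> {1..T}. \<beta> \<le> real (d t)}"

definition D_beta :: "(nat \<Rightarrow> nat) \<Rightarrow> nat \<Rightarrow> real \<Rightarrow> real" where
  "D_beta d T \<beta> = (\<Sum>t\<in>{1..T} - S_set d T \<beta>. real (d t))"

end

(*
  The expected regret is split along the epochs of Doubling.  Within epoch m, rounds with delay
  at least beta_m cost at most one each.  For the other rounds, a pathwise analysis of exponential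
  weights fed with importance-weighted losses in order of arrival bounds the loss by
  ln K / eta + (estimated loss of any fixed action) + a variance term + a drift term; the drift
  term compares the probability used when a round was played with the one current when its
  feedback arrives.  At most 2 beta_m feedbacks are outstanding at any time, so with
  eta = 1/(4 e beta_m) all these probability ratios stay below e.  In expectation the estimates
  are unbiased, and a collision term between two rounds has expectation one because the policy
  has not yet seen the earlier action.  The stay condition then makes every epoch cost at most
  3 sqrt(omega_m); the index of the last epoch is controlled by the first failed stay condition,
  which for every beta is bounded by the tuning objective, and the geometric sum over epochs
  gives the constants.
*)

theory Submission
  imports Defs
begin

lemma sum_mult_if_eq:
  fixes f g :: "'a \<Rightarrow> 'b::semiring_0"
  assumes "finite A" "a \<in> A"
  shows "(\<Sum>b\<in>A. f b * (if b = a then g b else 0)) = f a * g a"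
proof -
  have "(\<Sum>b\<in>A. f b * (if b = a then g b else 0)) = (\<Sum>b\<in>A. if b = a then f b * g b else 0)"
    by (intro sum.cong) auto
  then show ?thesis using assms by simp
qed

section \<open>The policy as a history-dependent kernel\<close>

declare pdist.simps[simp del]

text \<open>Both \<open>received\<close> and \<open>eta_eff\<close> depend on the history only through its length.\<close>

definition forwarded :: "nat \<Rightarrow> (nat \<Rightarrow> nat) \<Rightarrow> nat \<Rightarrow> nat set" where
  "forwarded K d n = received K d (replicate n 0)"

definition rate :: "nat \<Rightarrow> (nat \<Rightarrow> nat) \<Rightarrow> nat \<Rightarrow> real" where
  "rate K d n = eta_eff K d (replicate n 0)"

lemma received_eq_forwarded: "received K d h = forwarded K d (length h)"
  unfolding forwarded_def received_def by simp

lemma eta_eff_eq_rate: "eta_eff K d h = rate K d (length h)"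
  unfolding rate_def eta_eff_def by simp

lemma forwarded_bounds: "s \<in> forwarded K d n \<Longrightarrow> 1 \<le> s \<and> s + d s \<le> n"
  unfolding forwarded_def received_def by (auto split: prod.splits)

lemma pdist_unfold: "pdist K d l h a =
   exp (- rate K d (length h) * (\<Sum>s\<in>forwarded K d (length h).
          (if a = h ! (s - 1) then l s a / pdist K d l (take (s - 1) h) a else 0)))
   / (\<Sum>b\<in>{1..K}. exp (- rate K d (length h) * (\<Sum>s\<in>forwarded K d (length h).
          (if b = h ! (s - 1) then l s b / pdist K d l (take (s - 1) h) b else 0))))"
  by (subst pdist.simps) (simp add: Let_def received_eq_forwarded eta_eff_eq_rate)

lemma pdist_pos: "1 \<le> K \<Longrightarrow> 0 < pdist K d l h a"
  by (subst pdist_unfold) (auto intro!: divide_pos_pos sum_pos)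

lemma pdist_sum:
  assumes "1 \<le> K"
  shows "(\<Sum>a\<in>{1..K}. pdist K d l h a) = 1"
proof -
  define w where "w b = exp (- rate K d (length h) * (\<Sum>s\<in>forwarded K d (length h).
          (if b = h ! (s - 1) then l s b / pdist K d l (take (s - 1) h) b else 0)))" for b
  have "pdist K d l h a = w a / sum w {1..K}" for a
    unfolding w_def by (rule pdist_unfold)
  moreover have "sum w {1..K} > 0" using assms by (intro sum_pos) (auto simp: w_def)
  ultimately show ?thesis by (simp add: sum_divide_distrib[symmetric])
qed

lemma pdist_ignores_unforwarded:
  assumes "length h = n" "length h' = n" "1 \<le> s"
    and "\<And>i. i < n \<Longrightarrow> i \<noteq> s - 1 \<Longrightarrow> h ! i = h' ! i"
    and "\<And>k. k \<le> n \<Longrightarrow> s \<notin> forwarded K d k"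
  shows "pdist K d l h a = pdist K d l h' a"
  using assms
proof (induction n arbitrary: h h' a rule: less_induct)
  case (less n)
  have summand_eq: "(if b = h ! (u - 1) then l u b / pdist K d l (take (u - 1) h) b else 0)
           = (if b = h' ! (u - 1) then l u b / pdist K d l (take (u - 1) h') b else 0)"
    if u: "u \<in> forwarded K d n" for u b
  proof -
    from forwarded_bounds[OF u] have "1 \<le> u" "u + d u \<le> n" by auto
    moreover have "u \<noteq> s" using u less.prems(5) by auto
    ultimately have "h ! (u - 1) = h' ! (u - 1)"
      and "pdist K d l (take (u - 1) h) b = pdist K d l (take (u - 1) h') b"
      using less.prems by (auto intro!: less.prems(4) less.IH[of "u - 1"])
    then show ?thesis by (simp only:)
  qed
  show ?case
    using less.prems(1,2) summand_eq by (subst (1 2) pdist_unfold) (simp cong: sum.cong)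
qed

lemma pdist_change_unforwarded:
  assumes "length h1 = s - 1" "1 \<le> s"
    and "\<And>k. k \<le> length (h1 @ c # h2) \<Longrightarrow> s \<notin> forwarded K d k"
  shows "pdist K d l (h1 @ c # h2) a = pdist K d l (h1 @ c' # h2) a"
  using assms by (intro pdist_ignores_unforwarded[of _ "length (h1 @ c # h2)"])
    (auto simp: nth_append nth_Cons split: nat.splits)

section \<open>Expectations over action histories\<close>

locale action_kernel =
  fixes K :: nat and p :: "nat list \<Rightarrow> nat \<Rightarrow> real"
  assumes kernel_pos: "0 < p h a"
    and kernel_sum: "(\<Sum>a\<in>{1..K}. p h a) = 1"
begin

definition histories :: "nat \<Rightarrow> nat list set" where
  "histories n = {xs. length xs = n \<and> set xs \<subseteq> {1..K}}"

definition path_prob :: "nat list \<Rightarrow> nat list \<Rightarrow> real" where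
  "path_prob pre h = (\<Prod>i<length h. p (pre @ take i h) (h ! i))"

definition expect :: "nat \<Rightarrow> (nat list \<Rightarrow> real) \<Rightarrow> real" where
  "expect n f = (\<Sum>xs\<in>histories n. path_prob [] xs * f xs)"

lemma histories_length: "h \<in> histories n \<Longrightarrow> length h = n"
  unfolding histories_def by simp

lemma histories_nth: "h \<in> histories n \<Longrightarrow> i < n \<Longrightarrow> h ! i \<in> {1..K}"
  unfolding histories_def by (auto dest: nth_mem)

lemma histories_0: "histories 0 = {[]}"
  unfolding histories_def by auto

lemma histories_Suc: "histories (Suc n) = (\<lambda>(h, b). h @ [b]) ` (histories n \<times> {1..K})"
proof (intro set_eqI iffI)
  fix xs assume xs: "xs \<in> histories (Suc n)"
  then have ne: "xs \<noteq> []" unfolding histories_def by auto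
  then have "xs = butlast xs @ [last xs]" by simp
  moreover have "butlast xs \<in> histories n" "last xs \<in> {1..K}"
    using xs last_in_set[OF ne] unfolding histories_def by (auto dest: in_set_butlastD)
  ultimately show "xs \<in> (\<lambda>(h, b). h @ [b]) ` (histories n \<times> {1..K})" by force
qed (auto simp: histories_def)

lemma sum_histories_Suc:
  "(\<Sum>xs\<in>histories (Suc n). F xs) = (\<Sum>h\<in>histories n. \<Sum>b\<in>{1..K}. F (h @ [b]))"
proof -
  have "inj_on (\<lambda>(h, b). h @ [b]) (histories n \<times> {1..K})"
    by (auto simp: inj_on_def)
  then show ?thesis
    unfolding histories_Suc by (simp add: sum.reindex sum.cartesian_product split_def)
qed

lemma sum_histories_add:
  "(\<Sum>h\<in>histories (a + b). F h) = (\<Sum>h1\<in>histories a. \<Sum>h2\<in>histories b. F (h1 @ h2))"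
proof (induction b arbitrary: F)
  case 0 then show ?case by (simp add: histories_0)
next
  case (Suc b)
  from Suc[of "\<lambda>h. \<Sum>c\<in>{1..K}. F (h @ [c])"] show ?case
    by (simp add: sum_histories_Suc)
qed

lemma sum_histories_Cons:
  fixes F :: "nat list \<Rightarrow> 'a::comm_monoid_add"
  shows "(\<Sum>xs\<in>histories (Suc n). F xs) = (\<Sum>c\<in>{1..K}. \<Sum>h\<in>histories n. F (c # h))"
  using sum_histories_add[where a=1 and b=n and F=F]
  by (simp add: sum_histories_Suc histories_0 sum.swap[of _ "{1..K}"])

lemma path_prob_Nil [simp]: "path_prob pre [] = 1"
  unfolding path_prob_def by simp

lemma path_prob_snoc: "path_prob pre (h @ [b]) = path_prob pre h * p (pre @ h) b"
  unfolding path_prob_def by (simp add: nth_append)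

lemma path_prob_append: "path_prob pre (h1 @ h2) = path_prob pre h1 * path_prob (pre @ h1) h2"
  by (induction h2 rule: rev_induct)
    (simp_all add: path_prob_snoc append_assoc[symmetric] del: append_assoc)

lemma path_prob_nonneg: "0 \<le> path_prob pre h"
  unfolding path_prob_def by (intro prod_nonneg) (simp add: less_imp_le kernel_pos)

lemma sum_path_prob: "(\<Sum>h\<in>histories n. path_prob pre h) = 1"
proof (induction n)
  case 0 show ?case by (simp add: histories_0)
next
  case (Suc n)
  have "(\<Sum>h\<in>histories (Suc n). path_prob pre h)
      = (\<Sum>h\<in>histories n. path_prob pre h * (\<Sum>b\<in>{1..K}. p (pre @ h) b))"
    by (simp only: sum_histories_Suc path_prob_snoc sum_distrib_left)
  then show ?case using Suc by (simp only: kernel_sum mult_1_right)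
qed

lemma expect_const: "expect n (\<lambda>_. c) = c"
  unfolding expect_def by (simp add: sum_distrib_right[symmetric] sum_path_prob)

lemma expect_add: "expect n (\<lambda>x. f x + g x) = expect n f + expect n g"
  unfolding expect_def by (simp add: distrib_left sum.distrib)

lemma expect_cmult: "expect n (\<lambda>x. c * f x) = c * expect n f"
  unfolding expect_def by (simp add: sum_distrib_left mult.left_commute)

lemma expect_sum: "finite A \<Longrightarrow> expect n (\<lambda>x. \<Sum>i\<in>A. f i x) = (\<Sum>i\<in>A. expect n (f i))"
  unfolding expect_def by (simp add: sum_distrib_left sum.swap[of _ A])

lemma expect_mono: "(\<And>x. x \<in> histories n \<Longrightarrow> f x \<le> g x) \<Longrightarrow> expect n f \<le> expect n g"
  unfolding expect_def by (intro sum_mono mult_left_mono) (auto simp: path_prob_nonneg)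

lemma expect_cong: "(\<And>x. x \<in> histories n \<Longrightarrow> f x = g x) \<Longrightarrow> expect n f = expect n g"
  unfolding expect_def by (intro sum.cong) auto

lemma expect_Suc: "expect (Suc n) f = expect n (\<lambda>h. \<Sum>b\<in>{1..K}. p h b * f (h @ [b]))"
  unfolding expect_def by (simp add: sum_histories_Suc path_prob_snoc sum_distrib_left mult.assoc)

lemma expect_take: "n \<le> N \<Longrightarrow> expect N (\<lambda>xs. g (take n xs)) = expect n g"
proof (induction N rule: dec_induct)
  case base
  then show ?case by (intro expect_cong) (simp add: histories_def)
next
  case (step N)
  have "expect (Suc N) (\<lambda>xs. g (take n xs))
      = expect N (\<lambda>h. (\<Sum>b\<in>{1..K}. p h b) * g (take n h))"
    unfolding expect_Suc sum_distrib_right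
    by (intro expect_cong sum.cong) (auto simp: histories_def step.hyps)
  then show ?case using step.IH kernel_sum by simp
qed

text \<open>Round \<open>t\<close> is the \<open>t\<close>-th entry of a history, i.e. index \<open>t - 1\<close>.\<close>

lemma expect_round:
  assumes "1 \<le> t" "t \<le> N"
  shows "expect N (\<lambda>xs. G (take (t - 1) xs) (xs ! (t - 1)))
       = expect (t - 1) (\<lambda>h. \<Sum>b\<in>{1..K}. p h b * G h b)"
proof -
  have "expect N (\<lambda>xs. G (take (t - 1) xs) (xs ! (t - 1)))
      = expect N (\<lambda>xs. (\<lambda>ys. G (take (t - 1) ys) (ys ! (t - 1))) (take t xs))"
    using assms by (intro expect_cong) (auto simp: histories_def)
  also have "\<dots> = expect (Suc (t - 1)) (\<lambda>ys. G (take (t - 1) ys) (ys ! (t - 1)))"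
    using assms expect_take[of t N "\<lambda>ys. G (take (t - 1) ys) (ys ! (t - 1))"] by simp
  also have "\<dots> = expect (t - 1) (\<lambda>h. \<Sum>b\<in>{1..K}. p h b * G h b)"
    unfolding expect_Suc by (intro expect_cong sum.cong) (auto simp: histories_def nth_append)
  finally show ?thesis .
qed

definition loss_est :: "(nat \<Rightarrow> nat \<Rightarrow> real) \<Rightarrow> nat list \<Rightarrow> nat \<Rightarrow> nat \<Rightarrow> real" where
  "loss_est l xs s b = (if b = xs ! (s - 1) then l s b / p (take (s - 1) xs) b else 0)"

lemma expect_loss_est:
  assumes "1 \<le> t" "t \<le> N" "a \<in> {1..K}"
  shows "expect N (\<lambda>xs. loss_est l xs t a) = l t a"
proof -
  have "expect N (\<lambda>xs. loss_est l xs t a)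
      = expect N (\<lambda>xs. (\<lambda>h b. if b = a then l t a / p h a else 0) (take (t - 1) xs) (xs ! (t - 1)))"
    unfolding loss_est_def by (intro expect_cong) auto
  also have "\<dots> = expect (t - 1) (\<lambda>h. \<Sum>b\<in>{1..K}. p h b * (if b = a then l t a / p h a else 0))"
    by (rule expect_round[OF assms(1,2)])
  also have "\<dots> = expect (t - 1) (\<lambda>h. l t a)"
    using assms(3) kernel_pos by (intro expect_cong) (simp add: sum_mult_if_eq less_imp_neq[symmetric])
  finally show ?thesis by (simp add: expect_const)
qed

lemma expect_loss_sq_ratio:
  assumes "1 \<le> t" "t \<le> N"
  shows "expect N (\<lambda>xs. (l t (xs ! (t - 1)))\<^sup>2 / p (take (t - 1) xs) (xs ! (t - 1)))
       = (\<Sum>b\<in>{1..K}. (l t b)\<^sup>2)"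
proof -
  have "expect N (\<lambda>xs. (l t (xs ! (t - 1)))\<^sup>2 / p (take (t - 1) xs) (xs ! (t - 1)))
     = expect (t - 1) (\<lambda>h. \<Sum>b\<in>{1..K}. p h b * ((l t b)\<^sup>2 / p h b))"
    by (rule expect_round[OF assms])
  also have "\<dots> = expect (t - 1) (\<lambda>h. \<Sum>b\<in>{1..K}. (l t b)\<^sup>2)"
    using kernel_pos by (intro expect_cong sum.cong refl) (simp add: less_imp_neq[symmetric])
  finally show ?thesis by (simp add: expect_const)
qed

text \<open>If the kernel never looks at the action of round \<open>s\<close>, reweighting by the ratio
  of a later to the original probability of that action is unbiased.\<close>

lemma expect_ratio_unobserved:
  assumes "1 \<le> s" "s \<le> n"
    and invariant: "\<And>h1 c c' h2. length h1 = s - 1 \<Longrightarrow> length h1 + length h2 < n \<Longrightarrow>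
        p (h1 @ c # h2) = p (h1 @ c' # h2)"
  shows "expect n (\<lambda>h. p h (h ! (s - 1)) / p (take (s - 1) h) (h ! (s - 1))) = 1"
proof -
  define a where "a = s - 1"
  define b where "b = n - s"
  have n: "n = a + Suc b" using assms unfolding a_def b_def by simp
  have path_prob_inv: "path_prob (h1 @ [c]) h2 = path_prob (h1 @ [1]) h2"
    if "length h1 = a" "length h2 = b" for h1 h2 c
    unfolding path_prob_def using that n
    by (intro prod.cong refl) (simp add: a_def invariant[of h1 _ c 1])
  have inner: "(\<Sum>c\<in>{1..K}. \<Sum>h2\<in>histories b.
        path_prob [] (h1 @ c # h2) * (p (h1 @ c # h2) c / p h1 c)) = path_prob [] h1"
    if h1: "h1 \<in> histories a" for h1
  proof -
    have "path_prob [] (h1 @ c # h2) * (p (h1 @ c # h2) c / p h1 c)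
        = path_prob [] h1 * path_prob (h1 @ [1]) h2 * p (h1 @ 1 # h2) c"
      if "h2 \<in> histories b" for c h2
      using that h1 n kernel_pos[of h1 c] path_prob_append[of "[]" h1 "[c] @ h2"]
        path_prob_append[of h1 "[c]" h2] path_prob_inv[of h1 h2 c] invariant[of h1 h2 c 1]
      by (simp add: histories_length path_prob_def a_def)
    then have "(\<Sum>c\<in>{1..K}. \<Sum>h2\<in>histories b.
          path_prob [] (h1 @ c # h2) * (p (h1 @ c # h2) c / p h1 c))
        = (\<Sum>c\<in>{1..K}. \<Sum>h2\<in>histories b. path_prob [] h1 * path_prob (h1 @ [1]) h2 * p (h1 @ 1 # h2) c)"
      by (intro sum.cong refl)
    also have "\<dots> = (\<Sum>h2\<in>histories b. \<Sum>c\<in>{1..K}.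
        path_prob [] h1 * path_prob (h1 @ [1]) h2 * p (h1 @ 1 # h2) c)"
      by (rule sum.swap)
    also have "\<dots> = path_prob [] h1 * (\<Sum>h2\<in>histories b. path_prob (h1 @ [1]) h2)"
      by (simp only: sum_distrib_left[symmetric] kernel_sum mult_1_right)
    finally show ?thesis by (simp only: sum_path_prob mult_1_right)
  qed
  have "expect n (\<lambda>h. p h (h ! a) / p (take a h) (h ! a))
      = (\<Sum>h1\<in>histories a. \<Sum>c\<in>{1..K}. \<Sum>h2\<in>histories b.
          path_prob [] (h1 @ c # h2) * (p (h1 @ c # h2) c / p h1 c))"
    unfolding expect_def n sum_histories_add sum_histories_Cons
    by (intro sum.cong refl) (simp add: nth_append histories_length)
  also have "\<dots> = 1" using inner by (simp add: sum_path_prob)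
  finally show ?thesis unfolding a_def .
qed

lemma expect_collision_weight_earlier:
  assumes s: "1 \<le> s" and t: "1 \<le> t" "t \<le> N" and "s < t"
    and invariant: "\<And>h1 c c' h2. length h1 = s - 1 \<Longrightarrow>
        length h1 + length h2 < t - 1 \<Longrightarrow> p (h1 @ c # h2) = p (h1 @ c' # h2)"
  shows "expect N (\<lambda>xs. if xs ! (s - 1) = xs ! (t - 1)
                          then 1 / p (take (s - 1) xs) (xs ! (s - 1)) else 0) = 1"
proof -
  define G where "G h b = (if b = h ! (s - 1) then 1 / p (take (s - 1) h) (h ! (s - 1)) else 0)"
    for h b
  have "expect N (\<lambda>xs. if xs ! (s - 1) = xs ! (t - 1)
                          then 1 / p (take (s - 1) xs) (xs ! (s - 1)) else 0)
      = expect N (\<lambda>xs. G (take (t - 1) xs) (xs ! (t - 1)))"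
    using \<open>s < t\<close> s unfolding G_def by (intro expect_cong) auto
  also have "\<dots> = expect (t - 1) (\<lambda>h. \<Sum>b\<in>{1..K}. p h b * G h b)"
    by (rule expect_round[OF t])
  also have "\<dots> = expect (t - 1) (\<lambda>h. p h (h ! (s - 1)) / p (take (s - 1) h) (h ! (s - 1)))"
  proof (rule expect_cong)
    fix h assume "h \<in> histories (t - 1)"
    then have "h ! (s - 1) \<in> {1..K}" using \<open>s < t\<close> s by (intro histories_nth) auto
    from sum_mult_if_eq[OF _ this, of "p h" "\<lambda>_. 1 / p (take (s - 1) h) (h ! (s - 1))"]
    show "(\<Sum>b\<in>{1..K}. p h b * G h b) = p h (h ! (s - 1)) / p (take (s - 1) h) (h ! (s - 1))"
      unfolding G_def by simp
  qed
  also have "\<dots> = 1"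
    using \<open>s < t\<close> s invariant by (intro expect_ratio_unobserved) auto
  finally show ?thesis .
qed

lemma expect_collision_weight_later:
  assumes s: "1 \<le> s" "s \<le> N" and t: "1 \<le> t" and "t < s"
  shows "expect N (\<lambda>xs. if xs ! (s - 1) = xs ! (t - 1)
                          then 1 / p (take (s - 1) xs) (xs ! (s - 1)) else 0) = 1"
proof -
  define G where "G h b = (if b = h ! (t - 1) then 1 / p h b else 0)" for h b
  have "expect N (\<lambda>xs. if xs ! (s - 1) = xs ! (t - 1)
                          then 1 / p (take (s - 1) xs) (xs ! (s - 1)) else 0)
      = expect N (\<lambda>xs. G (take (s - 1) xs) (xs ! (s - 1)))"
    using \<open>t < s\<close> t unfolding G_def by (intro expect_cong) auto
  also have "\<dots> = expect (s - 1) (\<lambda>h. \<Sum>b\<in>{1..K}. p h b * G h b)"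
    by (rule expect_round[OF s])
  also have "\<dots> = expect (s - 1) (\<lambda>h. 1)"
  proof (rule expect_cong)
    fix h assume "h \<in> histories (s - 1)"
    then have "h ! (t - 1) \<in> {1..K}" using \<open>t < s\<close> t by (intro histories_nth) auto
    from sum_mult_if_eq[OF _ this, of "p h" "\<lambda>b. 1 / p h b"]
    show "(\<Sum>b\<in>{1..K}. p h b * G h b) = 1"
      unfolding G_def using kernel_pos[of h "h ! (t - 1)"] by simp
  qed
  finally show ?thesis by (simp add: expect_const)
qed

lemma expect_collision_weight:
  assumes "1 \<le> s" "s \<le> N" "1 \<le> t" "t \<le> N" "s \<noteq> t"
    and "s < t \<Longrightarrow> (\<And>h1 c c' h2. length h1 = s - 1 \<Longrightarrow>
        length h1 + length h2 < t - 1 \<Longrightarrow> p (h1 @ c # h2) = p (h1 @ c' # h2))"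
  shows "expect N (\<lambda>xs. if xs ! (s - 1) = xs ! (t - 1)
                          then 1 / p (take (s - 1) xs) (xs ! (s - 1)) else 0) = 1"
  using assms expect_collision_weight_earlier[of s t N] expect_collision_weight_later[of s N t]
  by (cases "s < t") auto

end

section \<open>Exponential weights with delayed feedback\<close>

lemma exp_neg_le_quadratic:
  fixes y :: real
  assumes "0 \<le> y"
  shows "exp (- y) \<le> 1 - y + y\<^sup>2 / 2"
proof -
  let ?f = "\<lambda>x::real. 1 - x + x\<^sup>2 / 2 - exp (- x)"
  have "?f 0 \<le> ?f y"
  proof (rule DERIV_nonneg_imp_nondecreasing[OF assms])
    fix x :: real assume "0 \<le> x" "x \<le> y"
    have "DERIV ?f x :> (- 1 + x + exp (- x))"
      by (auto intro!: derivative_eq_intros simp: power2_eq_square)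
    moreover have "- 1 + x + exp (- x) \<ge> 0" using exp_minus_ge[of x] by simp
    ultimately show "\<exists>z. DERIV ?f x :> z \<and> z \<ge> 0" by blast
  qed
  then show ?thesis by simp
qed

lemma inverse_one_minus_power_le_exp1:
  fixes x :: real
  assumes "0 \<le> x" "real n * x \<le> 1/2"
  shows "(1 / (1 - x)) ^ n \<le> exp 1"
proof (cases "n = 0")
  case True then show ?thesis by (simp add: exp_ge_add_one_self[of 1, simplified])
next
  case False
  then have n1: "real n \<ge> 1" by simp
  have x2: "x \<le> 1/2"
  proof -
    have "x \<le> real n * x" using n1 assms(1) by (simp add: mult_le_cancel_right1)
    then show ?thesis using assms by simp
  qed
  have pos: "0 < 1 - x" using x2 by simp
  have l: "- x - 2 * x\<^sup>2 \<le> ln (1 - x)" using ln_one_minus_pos_lower_bound[OF assms(1) x2] .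
  have "real n * (x + 2 * x\<^sup>2) = real n * x * (1 + 2 * x)" by (simp add: algebra_simps power2_eq_square)
  also have "\<dots> \<le> 1/2 * 2" using assms x2 by (intro mult_mono) auto
  finally have nb: "real n * (x + 2 * x\<^sup>2) \<le> 1" by simp
  have "(1 - x) ^ n = exp (real n * ln (1 - x))" using pos by (simp add: exp_of_nat_mult)
  also have "\<dots> \<ge> exp (- 1)"
  proof -
    have "real n * ln (1 - x) \<ge> real n * (- x - 2 * x\<^sup>2)" using l by (intro mult_left_mono) auto
    then have "real n * ln (1 - x) \<ge> - 1" using nb by (simp add: algebra_simps)
    then show ?thesis by simp
  qed
  finally have "(1 - x) ^ n \<ge> exp (- 1)" .
  then have "1 / (1 - x) ^ n \<le> 1 / exp (-1)"
    using pos by (intro divide_left_mono) auto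
  then show ?thesis by (simp add: power_one_over exp_minus inverse_eq_divide)
qed

text \<open>The feedback of the rounds in \<open>F\<close> is processed in the order given by the injective
  \<open>arrival\<close>; round \<open>s\<close> played \<open>A s\<close> with probability \<open>P s\<close> and suffered \<open>L s\<close>.
  \<open>arrived c\<close> is the feedback processed before position \<open>c\<close>.\<close>

locale delayed_exp_weights =
  fixes K :: nat and eta :: real and F :: "nat set" and arrival :: "nat \<Rightarrow> nat"
    and A :: "nat \<Rightarrow> nat" and L :: "nat \<Rightarrow> real" and P :: "nat \<Rightarrow> real"
  assumes K1: "1 \<le> K" and eta_pos: "0 < eta" and finite_F: "finite F"
    and arrival_inj: "inj_on arrival F" and A_range: "\<And>s. s \<in> F \<Longrightarrow> A s \<in> {1..K}"
    and L_nonneg: "\<And>s. s \<in> F \<Longrightarrow> 0 \<le> L s" and L_le_1: "\<And>s. s \<in> F \<Longrightarrow> L s \<le> 1"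
    and P_pos: "\<And>s. 0 < P s"
begin

definition est :: "nat \<Rightarrow> nat \<Rightarrow> real" where
  "est s b = (if b = A s then L s / P s else 0)"

definition arrived :: "nat \<Rightarrow> nat set" where
  "arrived c = {s \<in> F. arrival s < c}"

definition weight :: "nat set \<Rightarrow> nat \<Rightarrow> real" where
  "weight U b = exp (- eta * (\<Sum>s\<in>U. est s b))"

definition total_weight :: "nat set \<Rightarrow> real" where
  "total_weight U = (\<Sum>b\<in>{1..K}. weight U b)"

definition prob :: "nat set \<Rightarrow> nat \<Rightarrow> real" where
  "prob U b = weight U b / total_weight U"

lemma est_nonneg: "s \<in> F \<Longrightarrow> 0 \<le> est s b"
  unfolding est_def using L_nonneg P_pos by (simp add: less_imp_le)

lemma weight_pos: "0 < weight U b" unfolding weight_def by simp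

lemma total_weight_pos: "0 < total_weight U"
  unfolding total_weight_def using K1 by (intro sum_pos) (auto simp: weight_pos)

lemma prob_pos: "0 < prob U b" unfolding prob_def using weight_pos total_weight_pos by simp

lemma sum_prob: "(\<Sum>b\<in>{1..K}. prob U b) = 1"
proof -
  have "(\<Sum>b\<in>{1..K}. prob U b) = total_weight U / total_weight U"
    unfolding prob_def total_weight_def by (rule sum_divide_distrib[symmetric])
  then show ?thesis using total_weight_pos[of U] by simp
qed

lemma arrived_subset: "arrived c \<subseteq> F" unfolding arrived_def by auto
lemma finite_arrived: "finite (arrived c)"
  using finite_F by (auto intro: finite_subset[OF arrived_subset])

lemma weight_insert: "finite U \<Longrightarrow> t \<notin> U \<Longrightarrow> weight (insert t U) b = weight U b * exp (- eta * est t b)"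
  unfolding weight_def by (simp add: distrib_left exp_add[symmetric] algebra_simps)

lemma total_weight_insert:
  assumes a: "finite U" "t \<notin> U"
  shows "total_weight (insert t U) = total_weight U * (\<Sum>b\<in>{1..K}. prob U b * exp (- eta * est t b))"
proof -
  have "total_weight (insert t U) = (\<Sum>b\<in>{1..K}. weight U b * exp (- eta * est t b))"
    unfolding total_weight_def using a by (simp add: weight_insert)
  also have "\<dots> = total_weight U * (\<Sum>b\<in>{1..K}. prob U b * exp (- eta * est t b))"
    unfolding prob_def sum_distrib_left using total_weight_pos[of U] by (intro sum.cong) auto
  finally show ?thesis .
qed

lemma sum_mult_est: "t \<in> F \<Longrightarrow> (\<Sum>b\<in>{1..K}. f b * est t b) = f (A t) * (L t / P t)"
  unfolding est_def by (rule sum_mult_if_eq[OF _ A_range]) simp_all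

lemma log_total_weight_step:
  assumes U: "finite U" and t: "t \<in> F" "t \<notin> U"
  shows "(\<Sum>b\<in>{1..K}. prob U b * est t b)
     \<le> (ln (total_weight U) - ln (total_weight (insert t U))) / eta
        + eta / 2 * (\<Sum>b\<in>{1..K}. prob U b * (est t b)\<^sup>2)"
proof -
  define S where "S = (\<Sum>b\<in>{1..K}. prob U b * exp (- eta * est t b))"
  have S_pos: "0 < S" unfolding S_def using K1 by (intro sum_pos) (auto simp: prob_pos)
  have "ln (total_weight (insert t U)) - ln (total_weight U) = ln S"
    using total_weight_insert[OF U t(2)] total_weight_pos[of U] S_pos unfolding S_def[symmetric]
    by (simp add: ln_mult)
  also have "\<dots> \<le> S - 1" using ln_le_minus_one[OF S_pos] .
  also have "\<dots> \<le> (\<Sum>b\<in>{1..K}. prob U b * (1 - eta * est t b + (eta * est t b)\<^sup>2 / 2)) - 1"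
    unfolding S_def
  proof (intro diff_right_mono sum_mono mult_left_mono)
    fix b assume "b \<in> {1..K}"
    have "0 \<le> eta * est t b" using eta_pos est_nonneg[OF t(1)] by simp
    from exp_neg_le_quadratic[OF this]
    show "exp (- eta * est t b) \<le> 1 - eta * est t b + (eta * est t b)\<^sup>2 / 2" by simp
    show "0 \<le> prob U b" using prob_pos[of U b] by simp
  qed
  also have "\<dots> = - eta * (\<Sum>b\<in>{1..K}. prob U b * est t b)
      + eta\<^sup>2 / 2 * (\<Sum>b\<in>{1..K}. prob U b * (est t b)\<^sup>2)"
    using sum_prob[of U]
    by (simp add: algebra_simps sum.distrib sum_subtractf sum_distrib_left power_mult_distrib sum_negf)
  finally have "eta * (\<Sum>b\<in>{1..K}. prob U b * est t b)
      \<le> (ln (total_weight U) - ln (total_weight (insert t U)))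
        + eta\<^sup>2 / 2 * (\<Sum>b\<in>{1..K}. prob U b * (est t b)\<^sup>2)"
    by simp
  then have "eta * (\<Sum>b\<in>{1..K}. prob U b * est t b) / eta
      \<le> ((ln (total_weight U) - ln (total_weight (insert t U)))
        + eta\<^sup>2 / 2 * (\<Sum>b\<in>{1..K}. prob U b * (est t b)\<^sup>2)) / eta"
    using eta_pos by (intro divide_right_mono) auto
  then show ?thesis using eta_pos by (simp add: add_divide_distrib power2_eq_square)
qed

lemma arrived_0: "arrived 0 = {}" unfolding arrived_def by simp

lemma sum_arrived_telescope:
  fixes g :: "nat set \<Rightarrow> real"
  shows "(\<Sum>t\<in>arrived c. g (arrived (arrival t)) - g (insert t (arrived (arrival t))))
    = g {} - g (arrived c)"
proof (induction c)
  case 0 then show ?case by (simp add: arrived_0)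
next
  case (Suc c)
  show ?case
  proof (cases "\<exists>t\<in>F. arrival t = c")
    case True
    then obtain t where t: "t \<in> F" "arrival t = c" by blast
    have e1: "arrived (Suc c) = insert t (arrived c)"
      unfolding arrived_def using t arrival_inj by (auto simp: inj_on_def less_Suc_eq)
    have e2: "t \<notin> arrived c" unfolding arrived_def using t by simp
    have e3: "arrived (arrival t) = arrived c" using t by simp
    show ?thesis unfolding e1 using finite_arrived[of c] e2 Suc e3 by simp
  next
    case False
    then have "arrived (Suc c) = arrived c" unfolding arrived_def by (auto simp: less_Suc_eq)
    then show ?thesis using Suc by simp
  qed
qed

lemma arrived_eventually_all: "\<exists>c. arrived c = F"
proof
  show "arrived (Suc (Max (insert 0 (arrival ` F)))) = F"
    unfolding arrived_def using finite_F by (auto simp: le_imp_less_Suc)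
qed

lemma prob_insert_le:
  assumes U: "finite U" and t: "t \<in> F" "t \<notin> U"
    and D: "0 < 1 - eta * prob U (A t) * (L t / P t)"
  shows "prob (insert t U) b \<le> prob U b / (1 - eta * prob U (A t) * (L t / P t))"
proof -
  define S where "S = (\<Sum>c\<in>{1..K}. prob U c * exp (- eta * est t c))"
  have "(\<Sum>c\<in>{1..K}. prob U c * (1 - eta * est t c)) \<le> S"
    unfolding S_def
  proof (intro sum_mono mult_left_mono)
    fix c
    show "1 - eta * est t c \<le> exp (- eta * est t c)" using exp_minus_ge[of "eta * est t c"] by simp
    show "0 \<le> prob U c" using prob_pos[of U c] by simp
  qed
  moreover have "(\<Sum>c\<in>{1..K}. prob U c * (1 - eta * est t c)) = 1 - eta * prob U (A t) * (L t / P t)"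
  proof -
    have "(\<Sum>c\<in>{1..K}. prob U c * (1 - eta * est t c))
        = (\<Sum>c\<in>{1..K}. prob U c) - eta * (\<Sum>c\<in>{1..K}. prob U c * est t c)"
      by (simp add: algebra_simps sum_subtractf sum_distrib_left)
    then show ?thesis using sum_prob[of U] sum_mult_est[OF t(1), of "prob U"] by simp
  qed
  ultimately have SD: "1 - eta * prob U (A t) * (L t / P t) \<le> S" by simp
  have WI: "total_weight (insert t U) = total_weight U * S"
    unfolding S_def by (rule total_weight_insert[OF U t(2)])
  have "prob (insert t U) b = weight U b * exp (- eta * est t b) / (total_weight U * S)"
    unfolding prob_def WI weight_insert[OF U t(2)] ..
  also have "\<dots> \<le> weight U b / (total_weight U * S)"
    using total_weight_pos[of U] SD D weight_pos[of U b] est_nonneg[OF t(1), of b] eta_pos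
    by (intro divide_right_mono) (auto intro!: mult_pos_pos)
  also have "\<dots> \<le> weight U b / (total_weight U * (1 - eta * prob U (A t) * (L t / P t)))"
    using total_weight_pos[of U] SD D weight_pos[of U b]
    by (intro divide_left_mono mult_left_mono mult_pos_pos) auto
  also have "\<dots> = prob U b / (1 - eta * prob U (A t) * (L t / P t))"
    unfolding prob_def by simp
  finally show ?thesis .
qed

lemma prob_superset_lower:
  assumes "U \<subseteq> V" "V \<subseteq> F"
  shows "prob U b * (1 - eta * (\<Sum>s\<in>V - U. est s b)) \<le> prob V b"
proof -
  have fV: "finite V" using assms finite_F by (auto intro: finite_subset)
  have fU: "finite U" using assms fV by (auto intro: finite_subset)
  have split: "(\<Sum>s\<in>V. est s c) = (\<Sum>s\<in>U. est s c) + (\<Sum>s\<in>V - U. est s c)" for c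
    using sum.subset_diff[OF assms(1) fV, of "\<lambda>s. est s c"] by simp
  have wV: "weight V c = weight U c * exp (- eta * (\<Sum>s\<in>V - U. est s c))" for c
    unfolding weight_def split by (simp add: distrib_left exp_add[symmetric] algebra_simps)
  have nn: "0 \<le> (\<Sum>s\<in>V - U. est s c)" for c using assms by (intro sum_nonneg est_nonneg) auto
  have WVU: "total_weight V \<le> total_weight U"
    unfolding total_weight_def
  proof (intro sum_mono)
    fix c
    have "exp (- eta * (\<Sum>s\<in>V - U. est s c)) \<le> 1" using nn[of c] eta_pos by simp
    then show "weight V c \<le> weight U c"
      unfolding wV using weight_pos[of U c] by (simp add: mult_le_cancel_left1)
  qed
  have "prob U b * (1 - eta * (\<Sum>s\<in>V - U. est s b))
      = weight U b * (1 - eta * (\<Sum>s\<in>V - U. est s b)) / total_weight U"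
    unfolding prob_def by simp
  also have "\<dots> \<le> weight V b / total_weight U"
    unfolding wV
    using total_weight_pos[of U] weight_pos[of U b] exp_minus_ge[of "eta * (\<Sum>s\<in>V - U. est s b)"]
    by (intro divide_right_mono mult_left_mono) auto
  also have "\<dots> \<le> weight V b / total_weight V"
    using total_weight_pos[of V] weight_pos[of V b] WVU by (intro divide_left_mono) auto
  finally show ?thesis unfolding prob_def .
qed

lemma arrived_mono: "c \<le> c' \<Longrightarrow> arrived c \<subseteq> arrived c'" unfolding arrived_def by auto

lemma arrived_split_last:
  assumes "c \<le> c'" "arrived c' - arrived c \<noteq> {}"
  obtains s where "s \<in> arrived c' - arrived c" "c \<le> arrival s"
    "arrived c' = insert s (arrived (arrival s))"
proof -
  define D where "D = arrived c' - arrived c"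
  have "finite D" unfolding D_def using finite_arrived by simp
  moreover have "D \<noteq> {}" unfolding D_def by (fact assms(2))
  ultimately have "Max (arrival ` D) \<in> arrival ` D" by (intro Max_in) auto
  then obtain s where sD: "s \<in> D" and "arrival s = Max (arrival ` D)" by auto
  with \<open>finite D\<close> have s_max: "arrival u \<le> arrival s" if "u \<in> D" for u
    using that by simp
  from sD have sF: "s \<in> F" and "arrival s < c'" "c \<le> arrival s"
    unfolding D_def arrived_def by auto
  have "arrival u < arrival s" if "u \<in> arrived c'" "u \<noteq> s" for u
  proof (cases "u \<in> arrived c")
    case False
    with that have "u \<in> D" "u \<in> F" unfolding D_def arrived_def by auto
    with s_max sF \<open>u \<noteq> s\<close> arrival_inj show ?thesis
      by (metis inj_on_contraD order_le_neq_trans)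
  qed (use \<open>c \<le> arrival s\<close> in \<open>auto simp: arrived_def\<close>)
  then have "arrived c' = insert s (arrived (arrival s))"
    using sD \<open>arrival s < c'\<close> unfolding D_def arrived_def by auto
  with sD \<open>c \<le> arrival s\<close> show ?thesis using that unfolding D_def by blast
qed

lemma prob_insert_le_exp1:
  assumes "finite U" "s \<in> F" "s \<notin> U" "prob U (A s) \<le> exp 1 * P s" "exp 1 * eta < 1"
  shows "prob (insert s U) b \<le> prob U b / (1 - exp 1 * eta)"
proof -
  have "prob U (A s) * (L s / P s) \<le> exp 1 * P s * (1 / P s)"
    using assms(2,4) L_le_1 L_nonneg P_pos[of s] prob_pos
    by (intro mult_mono divide_right_mono) (auto simp: less_imp_le)
  then have "eta * (prob U (A s) * (L s / P s)) \<le> eta * exp 1"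
    using eta_pos P_pos[of s] by (intro mult_left_mono) auto
  then have den: "1 - exp 1 * eta \<le> 1 - eta * prob U (A s) * (L s / P s)"
    by (simp add: algebra_simps)
  have "prob (insert s U) b \<le> prob U b / (1 - eta * prob U (A s) * (L s / P s))"
    using den assms(5) by (intro prob_insert_le[OF assms(1-3)]) simp
  also have "\<dots> \<le> prob U b / (1 - exp 1 * eta)"
    using den assms(5) prob_pos[of U b] by (intro divide_left_mono) (auto intro: mult_pos_pos)
  finally show ?thesis .
qed

lemma prob_growth_bound:
  assumes "c \<le> c'" "card (arrived c' - arrived c) = n" "real n * (exp 1 * eta) \<le> 1/2"
    "\<forall>s\<in>arrived c' - arrived c. prob (arrived (arrival s)) (A s) \<le> exp 1 * P s"
  shows "prob (arrived c') b \<le> (1 / (1 - exp 1 * eta)) ^ n * prob (arrived c) b"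
  using assms
proof (induction n arbitrary: c')
  case 0
  then have "arrived c' = arrived c" using finite_arrived[of c'] arrived_mono[of c c'] by auto
  then show ?case by simp
next
  case (Suc n)
  then have "arrived c' - arrived c \<noteq> {}" by (metis card.empty nat.simps(3))
  with Suc.prems(1) obtain s where s: "s \<in> arrived c' - arrived c" "c \<le> arrival s"
    and split: "arrived c' = insert s (arrived (arrival s))"
    by (rule arrived_split_last)
  have sF: "s \<in> F" and s_new: "s \<notin> arrived (arrival s)" using s unfolding arrived_def by auto
  have diff: "arrived (arrival s) - arrived c = (arrived c' - arrived c) - {s}"
    using split s_new by auto
  have "0 \<le> real n * (exp 1 * eta)" "0 < exp 1 * eta" using eta_pos by auto
  then have small: "exp 1 * eta < 1" and n_small: "real n * (exp 1 * eta) \<le> 1/2"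
    using Suc.prems(3) unfolding of_nat_Suc distrib_right by linarith+
  have IH: "prob (arrived (arrival s)) b \<le> (1 / (1 - exp 1 * eta)) ^ n * prob (arrived c) b"
    using Suc.IH[OF s(2) _ n_small] Suc.prems(2,4) s(1) diff finite_arrived by simp
  have "prob (arrived c') b \<le> prob (arrived (arrival s)) b / (1 - exp 1 * eta)"
    unfolding split using Suc.prems(4) s(1) small
    by (intro prob_insert_le_exp1[OF finite_arrived sF s_new]) auto
  also have "\<dots> \<le> (1 / (1 - exp 1 * eta)) ^ n * prob (arrived c) b / (1 - exp 1 * eta)"
    using IH small by (intro divide_right_mono) auto
  finally show ?case by (simp add: field_simps)
qed

end

text \<open>\<open>play s\<close> is the position in the arrival order at which round \<open>s\<close> was played:
  \<open>P s\<close> is the probability computed from the feedback arrived by then, and the feedback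
  arriving between \<open>play s\<close> and \<open>arrival s\<close> is what drifts the weights while round
  \<open>s\<close> is outstanding.\<close>

locale delayed_exp_weights_played = delayed_exp_weights +
  fixes play :: "nat \<Rightarrow> nat"
  assumes play_le_arrival: "\<And>s. s \<in> F \<Longrightarrow> play s \<le> arrival s"
    and P_played: "\<And>s. s \<in> F \<Longrightarrow> P s = prob (arrived (play s)) (A s)"
    and outstanding_small: "\<And>s. s \<in> F \<Longrightarrow>
        real (card (arrived (arrival s) - arrived (play s))) * (exp 1 * eta) \<le> 1/2"
begin

lemma prob_stale_ratio:
  "s \<in> F \<Longrightarrow> prob (arrived (arrival s)) b \<le> exp 1 * prob (arrived (play s)) b"
proof (induction "arrival s" arbitrary: s b rule: less_induct)
  case less
  define n where "n = card (arrived (arrival s) - arrived (play s))"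
  have "prob (arrived (arrival u)) (A u) \<le> exp 1 * P u"
    if "u \<in> arrived (arrival s) - arrived (play s)" for u
    using that less.hyps[of u "A u"] P_played[of u] unfolding arrived_def by auto
  then have "prob (arrived (arrival s)) b \<le> (1 / (1 - exp 1 * eta)) ^ n * prob (arrived (play s)) b"
    using play_le_arrival[OF less.prems] outstanding_small[OF less.prems] unfolding n_def
    by (intro prob_growth_bound) auto
  also have "\<dots> \<le> exp 1 * prob (arrived (play s)) b"
    using inverse_one_minus_power_le_exp1[of "exp 1 * eta" n] outstanding_small[OF less.prems]
      eta_pos prob_pos[of "arrived (play s)" b]
    unfolding n_def by (intro mult_right_mono) auto
  finally show ?case .
qed

lemma total_weight_empty: "total_weight {} = real K"
  unfolding total_weight_def weight_def by simp

lemma loss_le_stale_prob_plus_drift: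
  assumes tF: "t \<in> F"
  shows "L t \<le> prob (arrived (arrival t)) (A t) * (L t / P t)
           + eta * (\<Sum>s\<in>arrived (arrival t) - arrived (play t). if A s = A t then 1 / P s else 0)"
proof -
  define Dt where "Dt = arrived (arrival t) - arrived (play t)"
  have Dt_F: "s \<in> Dt \<Longrightarrow> s \<in> F" for s unfolding Dt_def arrived_def by auto
  have Lt: "0 \<le> L t" "L t \<le> 1" and Ppos: "0 < P t" using L_nonneg[OF tF] L_le_1[OF tF] P_pos by auto
  have low: "P t * (1 - eta * (\<Sum>s\<in>Dt. est s (A t))) \<le> prob (arrived (arrival t)) (A t)"
    unfolding P_played[OF tF] Dt_def
    using prob_superset_lower[OF arrived_mono[OF play_le_arrival[OF tF]] arrived_subset] .
  have est_le: "(\<Sum>s\<in>Dt. est s (A t)) \<le> (\<Sum>s\<in>Dt. if A s = A t then 1 / P s else 0)"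
    using L_le_1 less_imp_le[OF P_pos] Dt_F unfolding est_def
    by (intro sum_mono) (auto intro: divide_right_mono)
  have est_nn: "0 \<le> (\<Sum>s\<in>Dt. est s (A t))" using Dt_F by (intro sum_nonneg est_nonneg)
  have "L t = P t * (1 - eta * (\<Sum>s\<in>Dt. est s (A t))) * (L t / P t)
                  + eta * (\<Sum>s\<in>Dt. est s (A t)) * L t"
    using Ppos by (simp add: algebra_simps)
  also have "\<dots> \<le> prob (arrived (arrival t)) (A t) * (L t / P t) + eta * (\<Sum>s\<in>Dt. est s (A t)) * 1"
    using low Lt Ppos eta_pos est_nn by (intro add_mono mult_right_mono mult_left_mono) auto
  also have "\<dots> \<le> prob (arrived (arrival t)) (A t) * (L t / P t)
                  + eta * (\<Sum>s\<in>Dt. if A s = A t then 1 / P s else 0)"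
    using est_le eta_pos by (intro add_left_mono mult_left_mono) auto
  finally show ?thesis unfolding Dt_def .
qed

lemma loss_le_potential_decrease:
  assumes tF: "t \<in> F"
  shows "L t \<le> (ln (total_weight (arrived (arrival t)))
                  - ln (total_weight (insert t (arrived (arrival t))))) / eta
           + eta * exp 1 / 2 * ((L t)\<^sup>2 / P t)
           + eta * (\<Sum>s\<in>arrived (arrival t) - arrived (play t). if A s = A t then 1 / P s else 0)"
proof -
  define q where "q = prob (arrived (arrival t))"
  have Lt: "0 \<le> L t" and Ppos: "0 < P t" using L_nonneg[OF tF] P_pos by auto
  have "t \<notin> arrived (arrival t)" unfolding arrived_def by simp
  from log_total_weight_step[OF finite_arrived tF this]
  have pot: "q (A t) * (L t / P t)
     \<le> (ln (total_weight (arrived (arrival t)))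
          - ln (total_weight (insert t (arrived (arrival t))))) / eta
       + eta / 2 * (q (A t) * (L t / P t) * (L t / P t))"
    using sum_mult_est[OF tF, of q] sum_mult_est[OF tF, of "\<lambda>b. q b * est t b"]
    unfolding q_def by (simp add: power2_eq_square mult.assoc est_def)
  have "q (A t) * (L t / P t) * (L t / P t) \<le> exp 1 * P t * (L t / P t) * (L t / P t)"
    using prob_stale_ratio[OF tF, of "A t"] Lt Ppos unfolding q_def P_played[OF tF]
    by (intro mult_right_mono) auto
  also have "\<dots> = exp 1 * ((L t)\<^sup>2 / P t)" using Ppos by (simp add: power2_eq_square)
  finally have "eta / 2 * (q (A t) * (L t / P t) * (L t / P t)) \<le> eta / 2 * (exp 1 * ((L t)\<^sup>2 / P t))"
    using eta_pos by (intro mult_left_mono) auto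
  also have "\<dots> = eta * exp 1 / 2 * ((L t)\<^sup>2 / P t)" by simp
  finally show ?thesis using loss_le_stale_prob_plus_drift[OF tF] pot unfolding q_def by linarith
qed

theorem loss_pathwise_bound:
  assumes a: "a \<in> {1..K}"
  shows "(\<Sum>t\<in>F. L t) \<le> ln (real K) / eta + (\<Sum>t\<in>F. est t a)
           + eta * exp 1 / 2 * (\<Sum>t\<in>F. (L t)\<^sup>2 / P t)
           + eta * (\<Sum>t\<in>F. \<Sum>s\<in>arrived (arrival t) - arrived (play t). if A s = A t then 1 / P s else 0)"
proof -
  obtain c where all: "arrived c = F" using arrived_eventually_all by blast
  have "(\<Sum>t\<in>F. L t) \<le> (\<Sum>t\<in>F. (ln (total_weight (arrived (arrival t)))
                  - ln (total_weight (insert t (arrived (arrival t))))) / eta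
           + eta * exp 1 / 2 * ((L t)\<^sup>2 / P t)
           + eta * (\<Sum>s\<in>arrived (arrival t) - arrived (play t). if A s = A t then 1 / P s else 0))"
    by (intro sum_mono loss_le_potential_decrease)
  also have "\<dots> = (\<Sum>t\<in>F. ln (total_weight (arrived (arrival t)))
                  - ln (total_weight (insert t (arrived (arrival t))))) / eta
           + eta * exp 1 / 2 * (\<Sum>t\<in>F. (L t)\<^sup>2 / P t)
           + eta * (\<Sum>t\<in>F. \<Sum>s\<in>arrived (arrival t) - arrived (play t). if A s = A t then 1 / P s else 0)"
    by (simp add: sum.distrib sum_distrib_left sum_divide_distrib)
  also have "(\<Sum>t\<in>F. ln (total_weight (arrived (arrival t)))
                  - ln (total_weight (insert t (arrived (arrival t)))))
      = ln (total_weight {}) - ln (total_weight F)"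
    using sum_arrived_telescope[of "\<lambda>U. ln (total_weight U)" c] unfolding all .
  also have "ln (total_weight {}) - ln (total_weight F) \<le> ln (real K) + eta * (\<Sum>t\<in>F. est t a)"
  proof -
    have "weight F a \<le> total_weight F" unfolding total_weight_def using a weight_pos
      by (intro member_le_sum) (auto simp: less_imp_le)
    then have "ln (weight F a) \<le> ln (total_weight F)" using weight_pos[of F a] by simp
    then show ?thesis unfolding total_weight_empty weight_def by simp
  qed
  finally show ?thesis using eta_pos
    by (simp add: divide_right_mono add_divide_distrib)
qed

end

section \<open>The epochs of Doubling\<close>

declare epoch.simps[simp del]

lemma omega_ge1: "1 \<le> omega m" unfolding omega_def by simp
lemma omega_pos: "0 < omega m" unfolding omega_def by simp
lemma omega_Suc: "omega (Suc m) = 2 * omega m" unfolding omega_def by simp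

locale doubling =
  fixes K :: nat and d :: "nat \<Rightarrow> nat"
  assumes K2: "2 \<le> K"
begin

lemma ln_K_pos: "0 < ln (real K)" using K2 by simp

lemma beta_pos: "0 < beta K m"
  unfolding beta_def using ln_K_pos omega_pos by simp

lemma beta_mult_ln_K: "beta K m * ln (real K) = sqrt (omega m) / (4 * exp 1)"
  unfolding beta_def using ln_K_pos by simp

lemma eta_eq: "eta K m = ln (real K) / sqrt (omega m)"
  unfolding eta_def beta_def using ln_K_pos omega_pos by (simp add: field_simps)

lemma stay_cond_single_round:
  assumes "exp 1 * real K * ln (real K) / 2 + sqrt (omega m) / (4 * exp 1) \<le> omega m"
  shows "stay_cond K d m t t"
proof -
  have c: "card {s \<in> {t..t}. beta K m \<le> real (d s)} \<le> 1"
    by (rule order_trans[OF card_mono[of "{t}"]]) auto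
  have c2: "(real (card {s \<in> {t..t}. beta K m \<le> real (d s)}))\<^sup>2 \<le> omega m"
  proof -
    have "(real (card {s \<in> {t..t}. beta K m \<le> real (d s)}))\<^sup>2 \<le> 1"
      using c by (simp add: power_le_one)
    then show ?thesis using omega_ge1[of m] by simp
  qed
  have sum: "(\<Sum>s\<in>{s \<in> {t..t}. real (d s) < beta K m}. real (d s)) \<le> beta K m"
  proof (cases "real (d t) < beta K m")
    case True
    then have "{s \<in> {t..t}. real (d s) < beta K m} = {t}" by auto
    then show ?thesis using True by simp
  next
    case False
    then have e: "{s \<in> {t..t}. real (d s) < beta K m} = {}" by auto
    show ?thesis unfolding e using beta_pos[of m] by simp
  qed
  have "(exp 1 * real K * real (t + 1 - t) / 2
          + (\<Sum>s\<in>{s \<in> {t..t}. real (d s) < beta K m}. real (d s))) * ln (real K)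
      \<le> (exp 1 * real K * 1 / 2 + beta K m) * ln (real K)"
    using sum ln_K_pos by (intro mult_right_mono) auto
  also have "\<dots> = exp 1 * real K * ln (real K) / 2 + sqrt (omega m) / (4 * exp 1)"
    using beta_mult_ln_K[of m] by (simp add: algebra_simps)
  also have "\<dots> \<le> omega m" by (rule assms)
  finally show ?thesis unfolding stay_cond_def using c2 by simp
qed

lemma sqrt_omega_div_le: "sqrt (omega m) / (4 * exp 1) \<le> omega m / 2"
proof -
  have "1 \<le> sqrt (omega m)" using omega_ge1 by simp
  then have "sqrt (omega m) * 1 \<le> sqrt (omega m) * sqrt (omega m)" by (intro mult_left_mono) auto
  also have "\<dots> = omega m" using omega_pos[of m] by simp
  finally have "sqrt (omega m) / (4 * exp 1) \<le> omega m / (4 * exp 1)"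
    by (intro divide_right_mono) auto
  also have "\<dots> \<le> omega m / 2"
    using omega_pos[of m] exp_ge_add_one_self[of 1] by (intro divide_left_mono) auto
  finally show ?thesis .
qed

lemma stay_cond_single_round_large:
  assumes "exp 1 * real K * ln (real K) \<le> omega m"
  shows "stay_cond K d m t t"
  using assms sqrt_omega_div_le[of m] by (intro stay_cond_single_round) simp

lemma stay_cond_larger_index: "\<exists>m'. m < m' \<and> stay_cond K d m' t t"
proof -
  define m' where "m' = Suc m + nat \<lceil>exp 1 * real K * ln (real K)\<rceil>"
  have "exp 1 * real K * ln (real K) \<le> real (nat \<lceil>exp 1 * real K * ln (real K)\<rceil>)"
    by linarith
  also have "\<dots> \<le> real m'" unfolding m'_def by simp
  also have "\<dots> \<le> omega m'" unfolding omega_def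
    using less_exp[of m'] by (metis less_imp_le of_nat_le_iff of_nat_numeral of_nat_power)
  finally have "stay_cond K d m' t t" by (rule stay_cond_single_round_large)
  then show ?thesis by (intro exI[of _ m']) (simp add: m'_def)
qed

lemma stay_cond_imp_K_ln_K_le:
  assumes "stay_cond K d m r t" "r \<le> t"
  shows "exp 1 * real K * ln (real K) / 2 \<le> omega m"
proof -
  let ?D = "\<Sum>s\<in>{s \<in> {r..t}. real (d s) < beta K m}. real (d s)"
  have "exp 1 * real K * 1 / 2 \<le> exp 1 * real K * real (t + 1 - r) / 2 + ?D"
    using assms(2) by (intro add_increasing2 sum_nonneg divide_right_mono mult_left_mono) auto
  then have "exp 1 * real K * 1 / 2 * ln (real K)
      \<le> (exp 1 * real K * real (t + 1 - r) / 2 + ?D) * ln (real K)"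
    using ln_K_pos by (intro mult_right_mono) auto
  also have "\<dots> \<le> omega m" using assms(1) unfolding stay_cond_def by simp
  finally show ?thesis by simp
qed

lemma stay_cond_Suc_single_round:
  assumes "stay_cond K d m r t" "r \<le> t"
  shows "stay_cond K d (Suc m) t' t'"
  using stay_cond_imp_K_ln_K_le[OF assms] sqrt_omega_div_le[of "Suc m"] omega_Suc[of m]
  by (intro stay_cond_single_round) simp

lemma epoch_first: "epoch K d (Suc 0) = (LEAST m. stay_cond K d m 1 1, 1)"
  by (subst epoch.simps(2)) simp

lemma epoch_Suc_unfold: assumes "1 \<le> t" shows "epoch K d (Suc t) =
   (let (m, r) = epoch K d t in
            if stay_cond K d m r (Suc t) then (m, r)
            else (LEAST m'. m < m' \<and> stay_cond K d m' (Suc t) (Suc t), Suc t))"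
  apply (subst epoch.simps(2))
  using assms by (simp only: if_False Let_def) simp

lemma epoch_invariant:
  assumes "1 \<le> t" "epoch K d t = (m, r)"
  shows "1 \<le> r \<and> r \<le> t \<and> stay_cond K d m r t \<and> (\<forall>s. r \<le> s \<and> s \<le> t \<longrightarrow> epoch K d s = (m, r))"
  using assms
proof (induction t arbitrary: m r rule: nat_induct_at_least)
  case base
  have e1: "epoch K d 1 = (LEAST m. stay_cond K d m 1 1, 1)" using epoch_first by simp
  have ex: "\<exists>m. stay_cond K d m 1 1" using stay_cond_larger_index by blast
  from base e1 have "m = (LEAST m. stay_cond K d m 1 1)" "r = 1" by auto
  then show ?case using LeastI_ex[OF ex] base by auto
next
  case (Suc t)
  obtain m0 r0 where e0: "epoch K d t = (m0, r0)" by (cases "epoch K d t")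
  note IH = Suc.IH[OF e0]
  show ?case
  proof (cases "stay_cond K d m0 r0 (Suc t)")
    case True
    then have "epoch K d (Suc t) = (m0, r0)" using epoch_Suc_unfold[OF Suc.hyps] e0 by simp
    then have "m = m0" "r = r0" using Suc.prems by auto
    then show ?thesis using IH True \<open>epoch K d (Suc t) = (m0, r0)\<close> by (auto simp: le_Suc_eq)
  next
    case False
    then have ee: "epoch K d (Suc t) = (LEAST m'. m0 < m' \<and> stay_cond K d m' (Suc t) (Suc t), Suc t)"
      using epoch_Suc_unfold[OF Suc.hyps] e0 by simp
    then have "m = (LEAST m'. m0 < m' \<and> stay_cond K d m' (Suc t) (Suc t))" "r = Suc t"
      using Suc.prems by auto
    moreover have "stay_cond K d (LEAST m'. m0 < m' \<and> stay_cond K d m' (Suc t) (Suc t)) (Suc t) (Suc t)"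
      using LeastI_ex[OF stay_cond_larger_index[of m0 "Suc t"]] by simp
    ultimately show ?thesis using ee by auto
  qed
qed

lemma epoch_Suc_cases:
  assumes "1 \<le> t"
  shows "epoch K d (Suc t) = epoch K d t \<or>
    (snd (epoch K d (Suc t)) = Suc t \<and> fst (epoch K d t) < fst (epoch K d (Suc t))
     \<and> fst (epoch K d (Suc t)) \<le> Suc (fst (epoch K d t))
     \<and> \<not> stay_cond K d (fst (epoch K d t)) (snd (epoch K d t)) (Suc t))"
proof -
  obtain m0 r0 where e0: "epoch K d t = (m0, r0)" by (cases "epoch K d t")
  note inv = epoch_invariant[OF assms e0]
  show ?thesis
  proof (cases "stay_cond K d m0 r0 (Suc t)")
    case True
    then show ?thesis using epoch_Suc_unfold[OF assms] e0 by simp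
  next
    case False
    then have ee: "epoch K d (Suc t) = (LEAST m'. m0 < m' \<and> stay_cond K d m' (Suc t) (Suc t), Suc t)"
      using epoch_Suc_unfold[OF assms] e0 by simp
    have w: "m0 < Suc m0 \<and> stay_cond K d (Suc m0) (Suc t) (Suc t)"
      using stay_cond_Suc_single_round[of m0 r0 t] inv by auto
    have "(LEAST m'. m0 < m' \<and> stay_cond K d m' (Suc t) (Suc t)) \<le> Suc m0"
      by (rule Least_le[of "\<lambda>m'. m0 < m' \<and> stay_cond K d m' (Suc t) (Suc t)", OF w])
    moreover have "m0 < (LEAST m'. m0 < m' \<and> stay_cond K d m' (Suc t) (Suc t))"
      using LeastI_ex[OF stay_cond_larger_index[of m0 "Suc t"]] by simp
    ultimately show ?thesis using ee e0 False by simp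
  qed
qed

lemma epoch_index_mono:
  assumes "1 \<le> t1" "t1 \<le> t2"
  shows "fst (epoch K d t1) \<le> fst (epoch K d t2) \<and>
         (epoch K d t1 \<noteq> epoch K d t2 \<longrightarrow> fst (epoch K d t1) < fst (epoch K d t2))"
  using assms(2)
proof (induction t2 rule: dec_induct)
  case base then show ?case by simp
next
  case (step t)
  have "1 \<le> t" using assms step by simp
  from epoch_Suc_cases[OF this] show ?case
  proof
    assume "epoch K d (Suc t) = epoch K d t" then show ?case using step.IH by simp
  next
    assume "snd (epoch K d (Suc t)) = Suc t \<and> fst (epoch K d t) < fst (epoch K d (Suc t))
     \<and> fst (epoch K d (Suc t)) \<le> Suc (fst (epoch K d t))
     \<and> \<not> stay_cond K d (fst (epoch K d t)) (snd (epoch K d t)) (Suc t)"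
    then have "fst (epoch K d t) < fst (epoch K d (Suc t))" by blast
    then show ?case using step.IH by (meson le_less_trans less_imp_le)
  qed
qed

lemma epoch_eq_if_index_eq:
  assumes "1 \<le> t1" "1 \<le> t2" "fst (epoch K d t1) = fst (epoch K d t2)"
  shows "epoch K d t1 = epoch K d t2"
proof (cases "t1 \<le> t2")
  case True
  then show ?thesis using epoch_index_mono[OF assms(1) True] assms(3) by (metis less_irrefl)
next
  case False
  then have t21: "t2 \<le> t1" by simp
  show ?thesis using epoch_index_mono[OF assms(2) t21] assms(3) by (metis less_irrefl)
qed

end

section \<open>The order of arrival of feedback\<close>

text \<open>Feedback of round \<open>s\<close> arrives at the end of round \<open>s + d s\<close>; for rounds below \<open>N\<close>,
  the key orders feedback by arrival round and breaks ties by \<open>s\<close>.\<close>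

context
  fixes d :: "nat \<Rightarrow> nat" and N :: nat
begin

definition arrival_key :: "nat \<Rightarrow> nat" where "arrival_key s = (s + d s) * N + s"

lemma arrival_key_less_iff: "u < N \<Longrightarrow> arrival_key u < v * N \<longleftrightarrow> u + d u < v"
proof
  assume u: "u < N" and k: "arrival_key u < v * N"
  show "u + d u < v"
  proof (rule ccontr)
    assume "\<not> u + d u < v"
    then have "v \<le> u + d u" by simp
    then have "v * N \<le> (u + d u) * N" by (rule mult_le_mono1)
    then show False using k unfolding arrival_key_def by linarith
  qed
next
  assume u: "u < N" and "u + d u < v"
  then have "Suc (u + d u) \<le> v" by simp
  then have "Suc (u + d u) * N \<le> v * N" by (rule mult_le_mono1)
  then show "arrival_key u < v * N" unfolding arrival_key_def using u by simp
qed

lemma arrival_key_less_imp_le: "s < N \<Longrightarrow> t < N \<Longrightarrow> arrival_key s < arrival_key t \<Longrightarrow> s + d s \<le> t + d t"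
proof (rule ccontr)
  assume s: "s < N" and t: "t < N" and k: "arrival_key s < arrival_key t" and "\<not> s + d s \<le> t + d t"
  then have "Suc (t + d t) \<le> s + d s" by simp
  then have "Suc (t + d t) * N \<le> (s + d s) * N" by (rule mult_le_mono1)
  then have "arrival_key t < arrival_key s" unfolding arrival_key_def using t by simp
  then show False using k by simp
qed

lemma inj_on_arrival_key: "inj_on arrival_key {..<N}"
proof (rule inj_onI)
  fix u v assume "u \<in> {..<N}" "v \<in> {..<N}" "arrival_key u = arrival_key v"
  then have "arrival_key u mod N = arrival_key v mod N" by simp
  then show "u = v" using \<open>u \<in> {..<N}\<close> \<open>v \<in> {..<N}\<close> unfolding arrival_key_def by simp
qed

definition outstanding :: "nat set \<Rightarrow> nat \<Rightarrow> nat set" where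
  "outstanding F t = {s \<in> F. arrival_key s < arrival_key t \<and> \<not> arrival_key s < t * N}"

lemma outstanding_bounds:
  assumes "F \<subseteq> {..<N}" "t \<in> F" "s \<in> outstanding F t"
  shows "s \<in> F \<and> s \<noteq> t \<and> t \<le> s + d s \<and> (t < s \<longrightarrow> s \<le> t + d t)"
proof -
  have sF: "s \<in> F" and k1: "arrival_key s < arrival_key t" and k2: "\<not> arrival_key s < t * N"
    using assms(3) unfolding outstanding_def by auto
  have sN: "s < N" and tN: "t < N" using assms sF by auto
  have "t \<le> s + d s" using k2 arrival_key_less_iff[OF sN, of t] by simp
  moreover have "s + d s \<le> t + d t" using arrival_key_less_imp_le[OF sN tN k1] .
  ultimately show ?thesis using sF k1 by auto
qed

lemma card_pos_below_le: "real (card {k::nat. 1 \<le> k \<and> real k < b}) \<le> max 0 b"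
proof -
  define n where "n = nat \<lceil>b\<rceil>"
  have sub: "{k::nat. 1 \<le> k \<and> real k < b} \<subseteq> {1..<n}"
    unfolding n_def by (auto, linarith)
  have "card {k::nat. 1 \<le> k \<and> real k < b} \<le> card {1..<n}" by (rule card_mono[OF _ sub]) simp
  also have "\<dots> = n - 1" by simp
  finally have c: "card {k::nat. 1 \<le> k \<and> real k < b} \<le> n - 1" .
  have "real (n - 1) \<le> max 0 b" unfolding n_def by linarith
  then show ?thesis using c by (meson of_nat_le_iff order_trans)
qed

lemma card_outstanding_le:
  assumes F: "F \<subseteq> {..<N}" "finite F" and t: "t \<in> F"
    and b: "\<And>u. u \<in> F \<Longrightarrow> real (d u) < b"
  shows "real (card (outstanding F t)) \<le> 2 * max 0 b"
proof -
  define J where "J = {k::nat. 1 \<le> k \<and> real k < b}"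
  have fJ: "finite J" unfolding J_def
    by (rule finite_subset[of _ "{..nat \<lceil>b\<rceil>}"]) (auto, linarith)
  have sub: "outstanding F t \<subseteq> (\<lambda>k. t - k) ` J \<union> (\<lambda>k. t + k) ` J"
  proof
    fix s assume s: "s \<in> outstanding F t"
    note fs = outstanding_bounds[OF F(1) t s]
    show "s \<in> (\<lambda>k. t - k) ` J \<union> (\<lambda>k. t + k) ` J"
    proof (cases "s < t")
      case True
      have "t - s \<in> J" unfolding J_def using fs True b[of s] by auto
      moreover have "s = t - (t - s)" using True by simp
      ultimately show ?thesis by blast
    next
      case False
      then have "t < s" using fs by simp
      have "s - t \<in> J" unfolding J_def using fs \<open>t < s\<close> b[OF t] by auto
      moreover have "s = t + (s - t)" using \<open>t < s\<close> by simp
      ultimately show ?thesis by blast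
    qed
  qed
  have "card (outstanding F t) \<le> card ((\<lambda>k. t - k) ` J \<union> (\<lambda>k. t + k) ` J)"
    by (rule card_mono[OF _ sub]) (simp add: fJ)
  also have "\<dots> \<le> card ((\<lambda>k. t - k) ` J) + card ((\<lambda>k. t + k) ` J)" by (rule card_Un_le)
  also have "\<dots> \<le> card J + card J" by (intro add_mono card_image_le fJ)
  finally have "real (card (outstanding F t)) \<le> real (card J) + real (card J)" by linarith
  also have "\<dots> \<le> 2 * max 0 b" using card_pos_below_le[of b] unfolding J_def by simp
  finally show ?thesis .
qed

lemma sum_card_outstanding_le:
  assumes F: "F \<subseteq> {..<N}" "finite F"
  shows "(\<Sum>t\<in>F. card (outstanding F t)) \<le> (\<Sum>u\<in>F. d u)"
proof -
  have fD: "finite (outstanding F t)" for t using F unfolding outstanding_def by simp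
  have "(\<Sum>t\<in>F. card (outstanding F t)) = card (Sigma F (outstanding F))"
    using F by (simp add: card_SigmaI fD)
  also have "\<dots> \<le> card (Sigma F (\<lambda>u. {u<..u + d u}))"
  proof (rule card_inj_on_le[where f = "\<lambda>(t, s). (min s t, max s t)"])
    show "finite (Sigma F (\<lambda>u. {u<..u + d u}))" using F by simp
    show "(\<lambda>(t, s). (min s t, max s t)) ` Sigma F (outstanding F) \<subseteq> Sigma F (\<lambda>u. {u<..u + d u})"
    proof
      fix x assume "x \<in> (\<lambda>(t, s). (min s t, max s t)) ` Sigma F (outstanding F)"
      then obtain t s where ts: "t \<in> F" "s \<in> outstanding F t" and x: "x = (min s t, max s t)" by auto
      note fs = outstanding_bounds[OF F(1) ts]
      show "x \<in> Sigma F (\<lambda>u. {u<..u + d u})"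
        using fs ts unfolding x by (cases "s < t") (auto simp: min_def max_def)
    qed
    show "inj_on (\<lambda>(t, s). (min s t, max s t)) (Sigma F (outstanding F))"
    proof (rule inj_onI, clarsimp)
      fix t s t' s'
      assume a: "t \<in> F" "s \<in> outstanding F t" "t' \<in> F" "s' \<in> outstanding F t'"
        and e: "min s t = min s' t'" "max s t = max s' t'"
      have k: "arrival_key s < arrival_key t" "arrival_key s' < arrival_key t'"
        using a unfolding outstanding_def by auto
      have n: "s \<noteq> t" "s' \<noteq> t'"
        using outstanding_bounds[OF F(1) a(1,2)] outstanding_bounds[OF F(1) a(3,4)] by auto
      from e n have "(s = s' \<and> t = t') \<or> (s = t' \<and> t = s')"
        by (auto simp: min_def max_def split: if_splits)
      then show "t = t' \<and> s = s'" using k by auto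
    qed
  qed
  also have "\<dots> = (\<Sum>u\<in>F. d u)" using F by (simp add: card_SigmaI)
  finally show ?thesis .
qed

end

section \<open>The regret of one epoch\<close>

locale delayed_bandit =
  fixes K :: nat and d :: "nat \<Rightarrow> nat" and l :: "nat \<Rightarrow> nat \<Rightarrow> real" and T :: nat
  assumes K2: "2 \<le> K"
    and loss_range: "\<And>t a. t \<in> {1..T} \<Longrightarrow> a \<in> {1..K} \<Longrightarrow> 0 \<le> l t a \<and> l t a \<le> 1"

sublocale delayed_bandit \<subseteq> action_kernel K "pdist K d l"
proof unfold_locales
  fix h a
  show "0 < pdist K d l h a" using K2 by (intro pdist_pos) simp
  show "(\<Sum>a\<in>{1..K}. pdist K d l h a) = 1" using K2 by (intro pdist_sum) simp
qed

sublocale delayed_bandit \<subseteq> doubling K d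
  using K2 by unfold_locales

context delayed_bandit
begin

abbreviation p :: "nat list \<Rightarrow> nat \<Rightarrow> real" where "p \<equiv> pdist K d l"

definition act :: "nat list \<Rightarrow> nat \<Rightarrow> nat" where
  "act xs s = xs ! (s - 1)"

definition act_loss :: "nat list \<Rightarrow> nat \<Rightarrow> real" where
  "act_loss xs s = l s (xs ! (s - 1))"

definition act_prob :: "nat list \<Rightarrow> nat \<Rightarrow> real" where
  "act_prob xs s = p (take (s - 1) xs) (xs ! (s - 1))"

end

locale doubling_epoch = delayed_bandit +
  fixes m r e :: nat
  assumes r_pos: "1 \<le> r" and r_le_e: "r \<le> e" and e_le_T: "e \<le> T"
    and in_epoch: "\<And>t. r \<le> t \<Longrightarrow> t \<le> e \<Longrightarrow> epoch K d t = (m, r)"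
    and stays: "stay_cond K d m r e"
begin

definition kept :: "nat set" where
  "kept = {s \<in> {r..e}. real (d s) < beta K m}"

definition skipped :: "nat set" where
  "skipped = {s \<in> {r..e}. beta K m \<le> real (d s)}"

abbreviation key :: "nat \<Rightarrow> nat" where "key \<equiv> arrival_key d (Suc T)"

definition kept_arrived :: "nat \<Rightarrow> nat set" where
  "kept_arrived c = {s \<in> kept. key s < c}"

lemma finite_kept: "finite kept"
  unfolding kept_def by simp

lemma kept_subset: "kept \<subseteq> {r..e}"
  unfolding kept_def by auto

lemma kept_less_Suc_T: "kept \<subseteq> {..<Suc T}"
  unfolding kept_def using e_le_T by auto

lemma kept_rounds: "s \<in> kept \<Longrightarrow> 1 \<le> s \<and> s \<le> T"
  using kept_subset r_pos e_le_T by force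

lemma eta_epoch_pos: "0 < eta K m"
  unfolding eta_def using beta_pos by simp

lemma rate_in_epoch: "r \<le> s \<Longrightarrow> s \<le> e \<Longrightarrow> rate K d (s - 1) = eta K m"
  unfolding rate_def eta_eff_def using in_epoch[of s] r_pos by (simp add: eta_def)

lemma forwarded_in_epoch:
  assumes "r \<le> s" "s \<le> e"
  shows "forwarded K d (s - 1) = kept_arrived (s * Suc T)"
proof -
  have "epoch K d (s - 1 + 1) = (m, r)" using in_epoch[OF assms] r_pos assms by simp
  then have "forwarded K d (s - 1) = {u. 1 \<le> u \<and> r \<le> u \<and> u + d u < s \<and> real (d u) < beta K m}"
    unfolding forwarded_def received_def using assms r_pos by auto
  also have "\<dots> = kept_arrived (s * Suc T)"
    unfolding kept_arrived_def kept_def using assms r_pos e_le_T arrival_key_less_iff[of _ "Suc T" d s]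
    by auto
  finally show ?thesis .
qed

lemma pdist_in_epoch:
  assumes xs: "xs \<in> histories T" and s: "r \<le> s" "s \<le> e"
  shows "p (take (s - 1) xs) b =
     exp (- eta K m * (\<Sum>u\<in>kept_arrived (s * Suc T). loss_est l xs u b)) /
     (\<Sum>c\<in>{1..K}. exp (- eta K m * (\<Sum>u\<in>kept_arrived (s * Suc T). loss_est l xs u c)))"
proof -
  have len: "length (take (s - 1) xs) = s - 1" using xs s e_le_T by (simp add: histories_length)
  have summand: "(if c = take (s - 1) xs ! (u - 1)
                   then l u c / p (take (u - 1) (take (s - 1) xs)) c else 0)
       = loss_est l xs u c" if "u \<in> kept_arrived (s * Suc T)" for u c
  proof -
    from that have "1 \<le> u" "u + d u \<le> s - 1"
      using forwarded_bounds forwarded_in_epoch[OF s] by blast+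
    then show ?thesis unfolding loss_est_def by (simp add: min_def)
  qed
  show ?thesis
    unfolding pdist_unfold[of K d l "take (s - 1) xs"] len rate_in_epoch[OF s] forwarded_in_epoch[OF s]
    using summand by (simp cong: sum.cong)
qed

end

context doubling_epoch
begin

lemma exp_weights_instance:
  assumes xs: "xs \<in> histories T"
  shows "delayed_exp_weights K (eta K m) kept key (act xs) (act_loss xs) (act_prob xs)"
proof
  show "1 \<le> K" using K2 by simp
  show "0 < eta K m" by (rule eta_epoch_pos)
  show "finite kept" by (rule finite_kept)
  show "inj_on key kept" using inj_on_arrival_key kept_less_Suc_T by (rule inj_on_subset)
  show act: "act xs s \<in> {1..K}" if "s \<in> kept" for s
    unfolding act_def using kept_rounds[OF that] by (intro histories_nth[OF xs]) auto
  show "0 \<le> act_loss xs s" "act_loss xs s \<le> 1" if "s \<in> kept" for s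
    using loss_range kept_rounds[OF that] act[OF that] unfolding act_loss_def act_def by auto
  show "0 < act_prob xs s" for s unfolding act_prob_def by (rule kernel_pos)
qed

context
  fixes xs assumes xs: "xs \<in> histories T"
begin

interpretation ew: delayed_exp_weights K "eta K m" kept key "act xs" "act_loss xs" "act_prob xs"
  by (rule exp_weights_instance[OF xs])

lemma est_instance: "ew.est u b = loss_est l xs u b"
  unfolding ew.est_def loss_est_def act_def act_loss_def act_prob_def by simp

lemma arrived_instance: "ew.arrived c = kept_arrived c"
  unfolding ew.arrived_def kept_arrived_def ..

lemma prob_instance:
  "ew.prob U b = exp (- eta K m * (\<Sum>u\<in>U. loss_est l xs u b))
     / (\<Sum>c\<in>{1..K}. exp (- eta K m * (\<Sum>u\<in>U. loss_est l xs u c)))"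
  unfolding ew.prob_def ew.weight_def ew.total_weight_def est_instance ..

lemma outstanding_instance:
  "ew.arrived (key t) - ew.arrived (t * Suc T) = outstanding d (Suc T) kept t"
  unfolding arrived_instance kept_arrived_def outstanding_def by auto

end

text \<open>Feedback that is outstanding while a kept round is played has delay below \<open>\<beta>\<close>, so
  at most \<open>2\<beta>\<close> rounds are outstanding; with \<open>\<eta> = 1/(4e\<beta>)\<close> this is the drift condition.\<close>

lemma exp_weights_played_instance:
  assumes xs: "xs \<in> histories T"
  shows "delayed_exp_weights_played K (eta K m) kept key (act xs) (act_loss xs) (act_prob xs)
           (\<lambda>s. s * Suc T)"
proof -
  interpret delayed_exp_weights K "eta K m" kept key "act xs" "act_loss xs" "act_prob xs"
    by (rule exp_weights_instance[OF xs])
  show ?thesis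
  proof
    fix s assume s: "s \<in> kept"
    have "s * Suc T \<le> (s + d s) * Suc T" by (rule mult_le_mono1) simp
    then show "s * Suc T \<le> key s" unfolding arrival_key_def by linarith
    show "act_prob xs s = prob (arrived (s * Suc T)) (act xs s)"
      unfolding prob_instance[OF xs] arrived_instance[OF xs] act_prob_def act_def
      using pdist_in_epoch[OF xs] s kept_subset by auto
    have "real (card (outstanding d (Suc T) kept s)) \<le> 2 * max 0 (beta K m)"
      using s by (intro card_outstanding_le[OF kept_less_Suc_T finite_kept]) (auto simp: kept_def)
    then have "real (card (arrived (key s) - arrived (s * Suc T))) * (exp 1 * eta K m)
        \<le> 2 * beta K m * (exp 1 * eta K m)"
      unfolding outstanding_instance[OF xs] using beta_pos[of m] eta_epoch_pos
      by (intro mult_right_mono) auto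
    also have "\<dots> = 1/2" unfolding eta_def using beta_pos[of m] by (simp add: field_simps)
    finally show "real (card (arrived (key s) - arrived (s * Suc T))) * (exp 1 * eta K m) \<le> 1/2" .
  qed
qed

lemma kept_loss_pathwise:
  assumes xs: "xs \<in> histories T" and a: "a \<in> {1..K}"
  shows "(\<Sum>t\<in>kept. l t (xs ! (t - 1))) \<le> ln (real K) / eta K m + (\<Sum>t\<in>kept. loss_est l xs t a)
     + eta K m * exp 1 / 2 * (\<Sum>t\<in>kept. (l t (xs ! (t - 1)))\<^sup>2 / p (take (t - 1) xs) (xs ! (t - 1)))
     + eta K m * (\<Sum>t\<in>kept. \<Sum>s\<in>outstanding d (Suc T) kept t.
          if xs ! (s - 1) = xs ! (t - 1) then 1 / p (take (s - 1) xs) (xs ! (s - 1)) else 0)"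
proof -
  interpret delayed_exp_weights_played K "eta K m" kept key "act xs" "act_loss xs" "act_prob xs"
    "\<lambda>s. s * Suc T"
    by (rule exp_weights_played_instance[OF xs])
  from loss_pathwise_bound[OF a] show ?thesis
    unfolding est_instance[OF xs] outstanding_instance[OF xs] act_def act_loss_def act_prob_def .
qed

end

context doubling_epoch
begin

lemma expect_outstanding_collisions:
  "expect T (\<lambda>xs. \<Sum>t\<in>kept. \<Sum>s\<in>outstanding d (Suc T) kept t.
       if xs ! (s - 1) = xs ! (t - 1) then 1 / p (take (s - 1) xs) (xs ! (s - 1)) else 0)
   = (\<Sum>t\<in>kept. real (card (outstanding d (Suc T) kept t)))"
proof -
  have "expect T (\<lambda>xs. if xs ! (s - 1) = xs ! (t - 1)
                          then 1 / p (take (s - 1) xs) (xs ! (s - 1)) else 0)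
      = 1" if t: "t \<in> kept" and s: "s \<in> outstanding d (Suc T) kept t" for s t
  proof -
    note out = outstanding_bounds[OF kept_less_Suc_T t s]
    have "pdist K d l (h1 @ c # h2) = pdist K d l (h1 @ c' # h2)"
      if "length h1 = s - 1" "length h1 + length h2 < t - 1" for h1 c c' h2
    proof (intro ext pdist_change_unforwarded)
      show "1 \<le> s" using out kept_rounds by blast
      show "s \<notin> forwarded K d k" if "k \<le> length (h1 @ c # h2)" for k
        using that \<open>length h1 + length h2 < t - 1\<close> out forwarded_bounds[of s K d k] by auto
    qed fact
    with t out show ?thesis
      by (intro expect_collision_weight) (auto dest: kept_rounds)
  qed
  moreover have "finite (outstanding d (Suc T) kept t)" for t
    unfolding outstanding_def using finite_kept by simp
  ultimately show ?thesis
    by (simp add: expect_sum finite_kept)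
qed

lemma expect_kept_loss_le_expected_terms:
  assumes a: "a \<in> {1..K}"
  shows "(\<Sum>t\<in>kept. expect T (\<lambda>xs. l t (xs ! (t - 1))))
    \<le> ln (real K) / eta K m + (\<Sum>t\<in>kept. l t a)
       + eta K m * exp 1 / 2 * (\<Sum>t\<in>kept. \<Sum>b\<in>{1..K}. (l t b)\<^sup>2)
       + eta K m * (\<Sum>t\<in>kept. real (card (outstanding d (Suc T) kept t)))"
proof -
  have est: "expect T (\<lambda>xs. \<Sum>t\<in>kept. loss_est l xs t a) = (\<Sum>t\<in>kept. l t a)"
    unfolding expect_sum[OF finite_kept] using expect_loss_est[OF _ _ a] kept_rounds
    by (intro sum.cong) auto
  have var: "expect T (\<lambda>xs. \<Sum>t\<in>kept. (l t (xs ! (t - 1)))\<^sup>2 / p (take (t - 1) xs) (xs ! (t - 1)))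
      = (\<Sum>t\<in>kept. \<Sum>b\<in>{1..K}. (l t b)\<^sup>2)"
    unfolding expect_sum[OF finite_kept] using expect_loss_sq_ratio kept_rounds
    by (intro sum.cong) auto
  have "(\<Sum>t\<in>kept. expect T (\<lambda>xs. l t (xs ! (t - 1))))
      = expect T (\<lambda>xs. \<Sum>t\<in>kept. l t (xs ! (t - 1)))"
    by (rule expect_sum[OF finite_kept, symmetric])
  also have "\<dots> \<le> expect T (\<lambda>xs. ln (real K) / eta K m + (\<Sum>t\<in>kept. loss_est l xs t a)
     + eta K m * exp 1 / 2 * (\<Sum>t\<in>kept. (l t (xs ! (t - 1)))\<^sup>2 / p (take (t - 1) xs) (xs ! (t - 1)))
     + eta K m * (\<Sum>t\<in>kept. \<Sum>s\<in>outstanding d (Suc T) kept t.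
        if xs ! (s - 1) = xs ! (t - 1) then 1 / p (take (s - 1) xs) (xs ! (s - 1)) else 0))"
    by (rule expect_mono) (rule kept_loss_pathwise[OF _ a])
  finally show ?thesis
    by (simp only: expect_add expect_cmult expect_const est var expect_outstanding_collisions)
qed

lemma expect_kept_loss_le:
  assumes a: "a \<in> {1..K}"
  shows "(\<Sum>t\<in>kept. expect T (\<lambda>xs. l t (xs ! (t - 1))))
    \<le> ln (real K) / eta K m + (\<Sum>t\<in>kept. l t a)
       + eta K m * (exp 1 * real K * real (card kept) / 2 + (\<Sum>s\<in>kept. real (d s)))"
proof -
  have "(\<Sum>t\<in>kept. \<Sum>b\<in>{1..K}. (l t b)\<^sup>2) \<le> (\<Sum>t\<in>kept. \<Sum>b\<in>{1..K}. 1)"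
    using loss_range kept_rounds by (intro sum_mono) (simp add: power_le_one)
  then have "eta K m * exp 1 / 2 * (\<Sum>t\<in>kept. \<Sum>b\<in>{1..K}. (l t b)\<^sup>2)
      \<le> eta K m * exp 1 / 2 * (real K * real (card kept))"
    using eta_epoch_pos by (intro mult_left_mono) (auto simp: mult.commute)
  moreover have "(\<Sum>t\<in>kept. real (card (outstanding d (Suc T) kept t))) \<le> (\<Sum>s\<in>kept. real (d s))"
    using sum_card_outstanding_le[OF kept_less_Suc_T finite_kept]
    by (simp only: of_nat_sum[symmetric] of_nat_le_iff)
  moreover have "eta K m * (exp 1 * real K * real (card kept) / 2 + (\<Sum>s\<in>kept. real (d s)))
      = eta K m * exp 1 / 2 * (real K * real (card kept)) + eta K m * (\<Sum>s\<in>kept. real (d s))"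
    by (simp add: algebra_simps)
  ultimately show ?thesis
    using expect_kept_loss_le_expected_terms[OF a] mult_left_mono[of _ _ "eta K m"] eta_epoch_pos
    by (smt (verit))
qed

end

context doubling_epoch
begin

lemma expect_skipped_loss_le:
  "(\<Sum>t\<in>skipped. expect T (\<lambda>xs. l t (xs ! (t - 1)))) \<le> real (card skipped)"
proof -
  have "expect T (\<lambda>xs. l t (xs ! (t - 1))) \<le> expect T (\<lambda>xs. 1)" if "t \<in> skipped" for t
  proof (rule expect_mono)
    fix xs assume "xs \<in> histories T"
    moreover have "t \<in> {1..T}" using that r_pos e_le_T unfolding skipped_def by auto
    ultimately show "l t (xs ! (t - 1)) \<le> 1" using loss_range histories_nth by fastforce
  qed
  then have "(\<Sum>t\<in>skipped. expect T (\<lambda>xs. l t (xs ! (t - 1)))) \<le> (\<Sum>t\<in>skipped. 1)"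
    by (intro sum_mono) (simp add: expect_const)
  then show ?thesis by simp
qed

lemma epoch_regret_le_stay_terms:
  assumes a: "a \<in> {1..K}"
  shows "(\<Sum>t\<in>{r..e}. expect T (\<lambda>xs. l t (xs ! (t - 1))) - l t a)
    \<le> ln (real K) / eta K m
       + eta K m * (exp 1 * real K * real (e + 1 - r) / 2 + (\<Sum>s\<in>kept. real (d s)))
       + real (card skipped)"
proof -
  have split: "{r..e} = kept \<union> skipped" "kept \<inter> skipped = {}"
    unfolding kept_def skipped_def by auto
  have "(\<Sum>t\<in>kept. l t a) \<le> (\<Sum>t\<in>{r..e}. l t a)"
    using kept_subset loss_range[of _ a] a r_pos e_le_T by (intro sum_mono2) auto
  moreover have "real (card kept) \<le> real (e + 1 - r)"
    using card_mono[OF _ kept_subset] by simp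
  then have "exp 1 * real K * real (card kept) / 2 \<le> exp 1 * real K * real (e + 1 - r) / 2"
    by (intro divide_right_mono mult_left_mono) auto
  then have "eta K m * (exp 1 * real K * real (card kept) / 2 + (\<Sum>s\<in>kept. real (d s)))
      \<le> eta K m * (exp 1 * real K * real (e + 1 - r) / 2 + (\<Sum>s\<in>kept. real (d s)))"
    using eta_epoch_pos by (intro mult_left_mono) auto
  moreover have "(\<Sum>t\<in>{r..e}. expect T (\<lambda>xs. l t (xs ! (t - 1))))
      = (\<Sum>t\<in>kept. expect T (\<lambda>xs. l t (xs ! (t - 1))))
        + (\<Sum>t\<in>skipped. expect T (\<lambda>xs. l t (xs ! (t - 1))))"
    unfolding split(1) by (rule sum.union_disjoint) (use finite_kept split in \<open>auto simp: skipped_def\<close>)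
  ultimately show ?thesis
    using expect_kept_loss_le[OF a] expect_skipped_loss_le by (simp add: sum_subtractf)
qed

text \<open>The stay condition bounds both \<open>|S|\<close> and \<open>\<eta>\<close> times the drift term by \<open>\<surd>\<omega>\<^sub>m\<close>,
  and \<open>ln K / \<eta> = \<surd>\<omega>\<^sub>m\<close>.\<close>

lemma epoch_regret_le:
  assumes a: "a \<in> {1..K}"
  shows "(\<Sum>t\<in>{r..e}. expect T (\<lambda>xs. l t (xs ! (t - 1))) - l t a) \<le> 3 * sqrt (omega m)"
proof -
  define V where "V = exp 1 * real K * real (e + 1 - r) / 2 + (\<Sum>s\<in>kept. real (d s))"
  have "(real (card skipped))\<^sup>2 \<le> omega m" "V * ln (real K) \<le> omega m"
    using stays unfolding stay_cond_def skipped_def[symmetric] kept_def[symmetric] V_def by auto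
  moreover have sq: "0 < sqrt (omega m)" using omega_pos by simp
  ultimately have "real (card skipped) \<le> sqrt (omega m)"
    and "V * ln (real K) / sqrt (omega m) \<le> omega m / sqrt (omega m)"
    by (auto intro: real_le_rsqrt divide_right_mono)
  moreover have "eta K m * V = V * ln (real K) / sqrt (omega m)" unfolding eta_eq by simp
  moreover have "omega m / sqrt (omega m) = sqrt (omega m)"
    using omega_pos[of m] by (metis less_eq_real_def real_div_sqrt)
  moreover have "ln (real K) / eta K m = sqrt (omega m)" unfolding eta_eq using ln_K_pos sq by simp
  ultimately show ?thesis using epoch_regret_le_stay_terms[OF a] unfolding V_def by linarith
qed

end

section \<open>Summing over the epochs\<close>

context doubling
begin

lemma epoch_index_class:
  assumes "{t \<in> {1..T}. fst (epoch K d t) = m} \<noteq> {}"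
  obtains r e where "{t \<in> {1..T}. fst (epoch K d t) = m} = {r..e}" "1 \<le> r" "r \<le> e" "e \<le> T"
    "\<And>t. r \<le> t \<Longrightarrow> t \<le> e \<Longrightarrow> epoch K d t = (m, r)" "stay_cond K d m r e"
proof -
  define G where "G = {t \<in> {1..T}. fst (epoch K d t) = m}"
  define e where "e = Max G"
  have "finite G" "G \<noteq> {}" using assms unfolding G_def by auto
  then have e: "e \<in> G" "\<And>t. t \<in> G \<Longrightarrow> t \<le> e" unfolding e_def by auto
  obtain r where er: "epoch K d e = (m, r)"
    using e(1) unfolding G_def by (metis (mono_tags, lifting) mem_Collect_eq prod.collapse)
  have e_range: "1 \<le> e" "e \<le> T" using e(1) unfolding G_def by auto
  note inv = epoch_invariant[OF e_range(1) er]
  have "G = {r..e}"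
  proof (intro set_eqI iffI)
    fix t assume t: "t \<in> G"
    then have t1: "1 \<le> t" and "fst (epoch K d t) = fst (epoch K d e)"
      using er unfolding G_def by auto
    then have "epoch K d t = (m, r)"
      using epoch_eq_if_index_eq[OF t1 e_range(1)] er by simp
    with epoch_invariant[OF t1] e(2)[OF t] show "t \<in> {r..e}" by auto
  next
    fix t assume "t \<in> {r..e}"
    then show "t \<in> G" using inv e_range unfolding G_def by auto
  qed
  with inv e_range show ?thesis unfolding G_def by (intro that) blast+
qed
end

context delayed_bandit
begin

lemma exp_loss_eq_sum_expect: "exp_loss K d l T = (\<Sum>t\<in>{1..T}. expect T (\<lambda>xs. l t (xs ! (t - 1))))"
proof -
  have "exp_loss K d l T = expect T (\<lambda>xs. \<Sum>i<T. l (i + 1) (xs ! i))"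
    unfolding exp_loss_def expect_def histories_def path_prob_def
    by (intro sum.cong) auto
  also have "\<dots> = (\<Sum>i<T. expect T (\<lambda>xs. l (i + 1) (xs ! i)))" by (rule expect_sum) simp
  also have "\<dots> = (\<Sum>t\<in>{1..T}. expect T (\<lambda>xs. l t (xs ! (t - 1))))"
    using sum.atLeast1_atMost_eq[of "\<lambda>t. expect T (\<lambda>xs. l t (xs ! (t - 1)))" T] by simp
  finally show ?thesis .
qed

lemma regret_le_sum_epochs:
  assumes a: "a \<in> {1..K}"
  shows "(\<Sum>t\<in>{1..T}. expect T (\<lambda>xs. l t (xs ! (t - 1))) - l t a)
       \<le> (\<Sum>m\<le>fst (epoch K d T). 3 * sqrt (omega m))"
proof -
  define g where "g t = expect T (\<lambda>xs. l t (xs ! (t - 1))) - l t a" for t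
  have "(\<lambda>t. fst (epoch K d t)) ` {1..T} \<subseteq> {..fst (epoch K d T)}"
    using epoch_index_mono by auto
  then have "(\<Sum>t\<in>{1..T}. g t) = (\<Sum>m\<le>fst (epoch K d T). \<Sum>t\<in>{t\<in>{1..T}. fst (epoch K d t) = m}. g t)"
    by (intro sum.group[symmetric]) auto
  also have "\<dots> \<le> (\<Sum>m\<le>fst (epoch K d T). 3 * sqrt (omega m))"
  proof (intro sum_mono)
    fix m
    show "(\<Sum>t\<in>{t\<in>{1..T}. fst (epoch K d t) = m}. g t) \<le> 3 * sqrt (omega m)"
    proof (cases "{t\<in>{1..T}. fst (epoch K d t) = m} = {}")
      case True
      show ?thesis unfolding True using omega_pos[of m] by simp
    next
      case False
      then obtain r e where G: "{t\<in>{1..T}. fst (epoch K d t) = m} = {r..e}"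
        and "1 \<le> r" "r \<le> e" "e \<le> T" "\<And>t. r \<le> t \<Longrightarrow> t \<le> e \<Longrightarrow> epoch K d t = (m, r)"
        and "stay_cond K d m r e"
        by (rule epoch_index_class) blast
      then interpret doubling_epoch K d l T m r e
        by (intro doubling_epoch.intro delayed_bandit_axioms doubling_epoch_axioms.intro)
      show ?thesis unfolding G g_def by (rule epoch_regret_le[OF a])
    qed
  qed
  finally show ?thesis unfolding g_def .
qed

end

lemma sum_sqrt_omega_le: "(\<Sum>m\<le>M. sqrt (omega m)) \<le> (2 + sqrt 2) * sqrt (omega M)"
proof (induction M)
  case 0 then show ?case by (simp add: omega_def)
next
  case (Suc M)
  have s: "sqrt (omega (Suc M)) = sqrt 2 * sqrt (omega M)"
    unfolding omega_Suc by (simp add: real_sqrt_mult)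
  have "(\<Sum>m\<le>Suc M. sqrt (omega m)) \<le> (2 + sqrt 2) * sqrt (omega M) + sqrt 2 * sqrt (omega M)"
    using Suc s by simp
  also have "\<dots> = (2 + sqrt 2) * sqrt (omega (Suc M))"
    unfolding s by (simp add: algebra_simps)
  finally show ?case .
qed

definition regret_objective :: "nat \<Rightarrow> (nat \<Rightarrow> nat) \<Rightarrow> nat \<Rightarrow> real \<Rightarrow> real" where
  "regret_objective K d T b = real (card (S_set d T b)) + 4 * exp 1 * b * ln (real K)
     + (real K * real T + D_beta d T b) / (4 * exp 1 * b)"

lemma D_beta_nonneg: "0 \<le> D_beta d T b"
  unfolding D_beta_def by (simp add: sum_nonneg)

lemma less_add_if_square_less:
  fixes x A b w :: real
  assumes "0 \<le> b" "0 \<le> w" "A \<le> w\<^sup>2" "x\<^sup>2 < A + b * x"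
  shows "x < b + w"
proof (rule ccontr)
  assume "\<not> x < b + w"
  then have h: "w \<le> x - b" by simp
  then have "w\<^sup>2 \<le> (x - b)\<^sup>2" using assms(2) by (intro power_mono) auto
  also have "(x - b)\<^sup>2 \<le> x * (x - b)" using h assms by (simp add: power2_eq_square mult_right_mono)
  finally have "A \<le> x * (x - b)" using assms(3) by simp
  then show False using assms(4) by (simp add: power2_eq_square algebra_simps)
qed

lemma sum_small_delays_le:
  assumes "1 \<le> r" "t \<le> T" "0 \<le> c"
  shows "(\<Sum>s\<in>{s \<in> {r..t}. real (d s) < c}. real (d s)) \<le> D_beta d T b + c * real (card (S_set d T b))"
proof -
  define P1 where "P1 = {s \<in> {r..t}. real (d s) < c \<and> real (d s) < b}"
  define P2 where "P2 = {s \<in> {r..t}. real (d s) < c \<and> b \<le> real (d s)}"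
  have "{s \<in> {r..t}. real (d s) < c} = P1 \<union> P2" "P1 \<inter> P2 = {}" unfolding P1_def P2_def by auto
  then have "(\<Sum>s\<in>{s \<in> {r..t}. real (d s) < c}. real (d s))
      = (\<Sum>s\<in>P1. real (d s)) + (\<Sum>s\<in>P2. real (d s))"
    by (simp add: sum.union_disjoint P1_def P2_def)
  also have "(\<Sum>s\<in>P1. real (d s)) \<le> D_beta d T b"
    unfolding D_beta_def P1_def S_set_def using assms by (intro sum_mono2) auto
  also have "(\<Sum>s\<in>P2. real (d s)) \<le> (\<Sum>s\<in>P2. c)"
    by (intro sum_mono) (auto simp: P2_def less_imp_le)
  also have "\<dots> \<le> c * real (card (S_set d T b))"
  proof -
    have "P2 \<subseteq> S_set d T b" unfolding P2_def S_set_def using assms by auto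
    then have "card P2 \<le> card (S_set d T b)" by (intro card_mono) (auto simp: S_set_def)
    then show ?thesis using assms(3) by (simp add: mult_left_mono mult.commute)
  qed
  finally show ?thesis by simp
qed

context doubling
begin

lemma regret_objective_nonneg: "0 < b \<Longrightarrow> 0 \<le> regret_objective K d T b"
  unfolding regret_objective_def using ln_K_pos D_beta_nonneg[of d T b] by simp

lemma sqrt_omega_le_objective_skipped:
  assumes fails: "omega m < (real (card {s \<in> {r..t}. beta K m \<le> real (d s)}))\<^sup>2"
    and "1 \<le> r" "t \<le> T" "0 < b"
  shows "sqrt (omega m) \<le> regret_objective K d T b"
proof (cases "beta K m \<le> b")
  case True
  have "sqrt (omega m) = 4 * exp 1 * (beta K m * ln (real K))" using beta_mult_ln_K by simp
  also have "\<dots> \<le> 4 * exp 1 * (b * ln (real K))" using True ln_K_pos by (intro mult_left_mono) auto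
  finally have "sqrt (omega m) \<le> 4 * exp 1 * b * ln (real K)" by (simp add: mult.assoc)
  moreover have "0 \<le> (real K * real T + D_beta d T b) / (4 * exp 1 * b)"
    using \<open>0 < b\<close> D_beta_nonneg[of d T b] by simp
  ultimately show ?thesis unfolding regret_objective_def by simp
next
  case False
  have "sqrt (omega m) < real (card {s \<in> {r..t}. beta K m \<le> real (d s)})"
    using real_sqrt_less_mono[OF fails] by simp
  also have "\<dots> \<le> real (card (S_set d T b))"
    using False assms(2,3) by (intro of_nat_mono card_mono) (auto simp: S_set_def)
  moreover have "0 \<le> 4 * exp 1 * b * ln (real K)"
    and "0 \<le> (real K * real T + D_beta d T b) / (4 * exp 1 * b)"
    using \<open>0 < b\<close> ln_K_pos D_beta_nonneg[of d T b] by simp_all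
  ultimately show ?thesis unfolding regret_objective_def by linarith
qed

lemma volume_le_objective_square:
  assumes "0 < b"
  shows "(exp 1 * real K * real T / 2 + D_beta d T b) * ln (real K)
    \<le> (4 * exp 1 * b * ln (real K) + (real K * real T + D_beta d T b) / (4 * exp 1 * b))\<^sup>2"
proof -
  define u where "u = 4 * exp 1 * b * ln (real K)"
  define v where "v = (real K * real T + D_beta d T b) / (4 * exp 1 * b)"
  define KT where "KT = real K * real T"
  have "exp 1 * KT \<le> 3 * KT" unfolding KT_def using exp_le by (intro mult_right_mono) auto
  moreover have "0 \<le> KT" unfolding KT_def by simp
  ultimately have "exp 1 * KT / 2 + D_beta d T b \<le> 4 * (KT + D_beta d T b)"
    using D_beta_nonneg[of d T b] by (simp add: field_simps)
  then have "(exp 1 * real K * real T / 2 + D_beta d T b) * ln (real K)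
      \<le> 4 * (KT + D_beta d T b) * ln (real K)"
    unfolding KT_def using ln_K_pos by (intro mult_right_mono) (auto simp: mult.assoc)
  also have "\<dots> = 4 * (u * v)" unfolding u_def v_def KT_def using assms by simp
  also have "\<dots> \<le> (u - v)\<^sup>2 + 4 * (u * v)" by simp
  also have "\<dots> = (u + v)\<^sup>2" by (simp add: power2_eq_square algebra_simps)
  finally show ?thesis unfolding u_def v_def .
qed

text \<open>With \<open>x = \<surd>\<omega>\<^sub>m\<close>, failure gives \<open>x\<^sup>2 < A + |S\<^sub>b| x / (4e)\<close> with
  \<open>A \<le> (u + v)\<^sup>2\<close>, where \<open>u, v\<close> are the two last summands of the objective.\<close>

lemma sqrt_omega_le_objective_volume:
  assumes fails: "omega m < (exp 1 * real K * real (t + 1 - r) / 2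
                    + (\<Sum>s\<in>{s \<in> {r..t}. real (d s) < beta K m}. real (d s))) * ln (real K)"
    and "1 \<le> r" "r \<le> t" "t \<le> T" "0 < b"
  shows "sqrt (omega m) \<le> regret_objective K d T b"
proof -
  define x where "x = sqrt (omega m)"
  define S where "S = real (card (S_set d T b))"
  define u where "u = 4 * exp 1 * b * ln (real K)"
  define v where "v = (real K * real T + D_beta d T b) / (4 * exp 1 * b)"
  define A where "A = (exp 1 * real K * real T / 2 + D_beta d T b) * ln (real K)"
  have "exp 1 * real K * real (t + 1 - r) / 2 \<le> exp 1 * real K * real T / 2"
    using assms(2-4) by (intro divide_right_mono mult_left_mono) auto
  then have "(exp 1 * real K * real (t + 1 - r) / 2
                  + (\<Sum>s\<in>{s \<in> {r..t}. real (d s) < beta K m}. real (d s))) * ln (real K)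
      \<le> (exp 1 * real K * real T / 2 + (D_beta d T b + beta K m * S)) * ln (real K)"
    using sum_small_delays_le[OF assms(2,4), of "beta K m" d b] beta_pos[of m] ln_K_pos
    unfolding S_def by (intro mult_right_mono add_mono) auto
  with fails have "x\<^sup>2 < (exp 1 * real K * real T / 2 + (D_beta d T b + beta K m * S)) * ln (real K)"
    unfolding x_def using omega_pos[of m] by simp
  also have "\<dots> = A + S / (4 * exp 1) * x"
    unfolding A_def x_def using beta_mult_ln_K[of m] by (simp add: algebra_simps)
  finally have square: "x\<^sup>2 < A + S / (4 * exp 1) * x" .
  have A_le: "A \<le> (u + v)\<^sup>2"
    unfolding A_def u_def v_def by (rule volume_le_objective_square[OF \<open>0 < b\<close>])
  have S_nn: "0 \<le> S" and "0 \<le> u + v"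
    unfolding S_def u_def v_def using \<open>0 < b\<close> ln_K_pos D_beta_nonneg[of d T b] by simp_all
  then have "x < S / (4 * exp 1) + (u + v)"
    by (intro less_add_if_square_less[OF _ _ A_le square]) simp_all
  moreover have "S / (4 * exp 1) \<le> S / 1"
    using S_nn exp_ge_add_one_self[of 1] by (intro divide_left_mono) auto
  ultimately have "x \<le> S + u + v" by simp
  then show ?thesis
    unfolding regret_objective_def x_def[symmetric] S_def[symmetric] u_def[symmetric] v_def[symmetric] .
qed

lemma sqrt_omega_le_objective_if_not_stay:
  assumes "\<not> stay_cond K d m r t" "1 \<le> r" "r \<le> t" "t \<le> T" "0 < b"
  shows "sqrt (omega m) \<le> regret_objective K d T b"
  using assms(1) unfolding stay_cond_def not_le less_max_iff_disj
proof
  assume "omega m < (real (card {s \<in> {r..t}. beta K m \<le> real (d s)}))\<^sup>2"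
  then show ?thesis using assms(2,4,5) by (rule sqrt_omega_le_objective_skipped)
next
  assume "omega m < (exp 1 * real K * real (t + 1 - r) / 2
                    + (\<Sum>s\<in>{s \<in> {r..t}. real (d s) < beta K m}. real (d s))) * ln (real K)"
  then show ?thesis using assms(2-5) by (rule sqrt_omega_le_objective_volume)
qed

end

lemma sqrt_2_le: "sqrt 2 \<le> (3/2 :: real)"
proof -
  have "sqrt 2 \<le> sqrt ((3/2)\<^sup>2)" by (intro real_sqrt_le_mono) (simp add: power2_eq_square)
  then show ?thesis by simp
qed

context doubling
begin

lemma K_ln_K_ge_1: "1 \<le> real K * ln (real K)"
proof -
  have "ln (1/2 :: real) \<le> 1/2 - 1" by (rule ln_le_minus_one) simp
  then have "1/2 \<le> ln (2 :: real)" by (simp add: ln_div)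
  also have "\<dots> \<le> ln (real K)" using K2 by simp
  finally have "2 * (1/2) \<le> real K * ln (real K)" using K2 by (intro mult_mono) auto
  then show ?thesis by simp
qed

lemma constant_ge: "40 * (real K * ln (real K)) + 5 \<le> 10 * (exp 1)\<^sup>2 * real K * ln (real K) + 5"
proof -
  have "2 * 2 \<le> exp (1::real) * exp 1"
    using exp_ge_add_one_self[of 1] by (intro mult_mono) auto
  then have "10 * 4 * (real K * ln (real K)) \<le> 10 * (exp 1)\<^sup>2 * (real K * ln (real K))"
    using K_ln_K_ge_1 by (intro mult_right_mono) (auto simp: power2_eq_square)
  then show ?thesis by (simp add: mult.assoc)
qed

lemma sqrt_omega_le_if_single_round_fails:
  assumes "\<not> stay_cond K d m t t"
  shows "sqrt (omega m) < exp 1 * real K * ln (real K) / 2 + 1"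
proof (rule ccontr)
  define x where "x = sqrt (omega m)"
  define A where "A = exp 1 * real K * ln (real K) / 2"
  assume "\<not> sqrt (omega m) < exp 1 * real K * ln (real K) / 2 + 1"
  then have "A + 1 \<le> x" unfolding x_def A_def by simp
  moreover have "1 \<le> x" "0 \<le> A" unfolding x_def A_def using omega_ge1 ln_K_pos by simp_all
  ultimately have "x * (A + 1) \<le> x * x" "A \<le> x * A" by (simp_all add: mult_le_cancel_right1)
  moreover have "x / (4 * exp 1) \<le> x"
    using \<open>1 \<le> x\<close> exp_ge_add_one_self[of 1] by (simp add: divide_le_eq)
  moreover have "x * x = omega m" unfolding x_def using omega_pos[of m] by simp
  ultimately have "A + x / (4 * exp 1) \<le> omega m" by (simp add: algebra_simps)
  then show False using assms stay_cond_single_round unfolding A_def x_def by blast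
qed

lemma sqrt_omega_first_index_le:
  assumes "M = (LEAST m. stay_cond K d m 1 1)"
  shows "3 * ((2 + sqrt 2) * sqrt (omega M)) \<le> 10 * (exp 1)\<^sup>2 * real K * ln (real K) + 5"
proof (cases M)
  case 0
  have "3 * ((2 + sqrt 2) * sqrt (omega M)) \<le> 45" using sqrt_2_le unfolding 0 omega_def by simp
  then show ?thesis using constant_ge K_ln_K_ge_1 by linarith
next
  case (Suc M0)
  then have "\<not> stay_cond K d M0 1 1"
    using assms not_less_Least[of M0 "\<lambda>m. stay_cond K d m 1 1"] by simp
  then have x: "sqrt (omega M0) < exp 1 * real K * ln (real K) / 2 + 1"
    by (rule sqrt_omega_le_if_single_round_fails)
  have "3 * ((2 + sqrt 2) * sqrt (omega M)) = (6 * sqrt 2 + 6) * sqrt (omega M0)"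
    unfolding Suc omega_Suc by (simp add: real_sqrt_mult algebra_simps)
  also have "\<dots> \<le> 15 * sqrt (omega M0)"
    using sqrt_2_le omega_pos[of M0] by (intro mult_right_mono) auto
  also have "\<dots> \<le> 15 * (exp 1 * real K * ln (real K) / 2 + 1)" using x by simp
  also have "\<dots> \<le> 15 * (3 / 2 * (real K * ln (real K)) + 1)"
  proof -
    have "exp 1 * real K * ln (real K) \<le> 3 * (real K * ln (real K))"
      using mult_right_mono[OF exp_le, of "real K * ln (real K)"] K_ln_K_ge_1 by (simp only: mult.assoc)
    then show ?thesis by (simp add: field_simps)
  qed
  also have "\<dots> \<le> 10 * (exp 1)\<^sup>2 * real K * ln (real K) + 5"
    using constant_ge K_ln_K_ge_1 by (simp add: algebra_simps)
  finally show ?thesis .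
qed

lemma sqrt_omega_restart_index_le:
  assumes "M \<le> Suc m" "\<not> stay_cond K d m r t" "1 \<le> r" "r \<le> t" "t \<le> T" "0 < b"
  shows "3 * ((2 + sqrt 2) * sqrt (omega M)) \<le> 15 * regret_objective K d T b"
proof -
  have "omega M \<le> omega (Suc m)"
    unfolding omega_def using assms(1) by (intro power_increasing) auto
  then have "sqrt (omega M) \<le> sqrt (omega (Suc m))" by simp
  also have "\<dots> = sqrt 2 * sqrt (omega m)" unfolding omega_Suc by (simp add: real_sqrt_mult)
  also have "\<dots> \<le> sqrt 2 * regret_objective K d T b"
    using sqrt_omega_le_objective_if_not_stay[OF assms(2-6)] by (intro mult_left_mono) auto
  finally have "sqrt (omega M) \<le> sqrt 2 * regret_objective K d T b" .
  then have "3 * ((2 + sqrt 2) * sqrt (omega M))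
      \<le> 3 * ((2 + sqrt 2) * (sqrt 2 * regret_objective K d T b))"
    by (intro mult_left_mono) auto
  also have "\<dots> = (6 * sqrt 2 + 6) * regret_objective K d T b" by (simp add: algebra_simps)
  also have "\<dots> \<le> 15 * regret_objective K d T b"
    using sqrt_2_le regret_objective_nonneg[OF assms(6)] by (intro mult_right_mono) auto
  finally show ?thesis .
qed

text \<open>The last epoch either is the first one, or was opened because the stay condition of
  its predecessor failed, whose index is then controlled by the objective.\<close>

lemma sqrt_omega_last_index_le:
  assumes "1 \<le> T" "0 < b"
  shows "3 * ((2 + sqrt 2) * sqrt (omega (fst (epoch K d T))))
     \<le> 15 * regret_objective K d T b + (10 * (exp 1)\<^sup>2 * real K * ln (real K) + 5)"
proof -
  obtain M r where eT: "epoch K d T = (M, r)" by (cases "epoch K d T")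
  note inv = epoch_invariant[OF assms(1) eT]
  have nonneg: "0 \<le> regret_objective K d T b" "0 \<le> 10 * (exp 1)\<^sup>2 * real K * ln (real K) + 5"
    using regret_objective_nonneg[OF assms(2)] ln_K_pos by simp_all
  show ?thesis
  proof (cases "r = 1")
    case True
    then have "epoch K d 1 = (M, 1)" using inv assms(1) by auto
    then have "M = (LEAST m. stay_cond K d m 1 1)" using epoch_first by simp
    then have "3 * ((2 + sqrt 2) * sqrt (omega M)) \<le> 10 * (exp 1)\<^sup>2 * real K * ln (real K) + 5"
      by (rule sqrt_omega_first_index_le)
    then show ?thesis unfolding eT fst_conv using nonneg by linarith
  next
    case False
    define t0 where "t0 = r - 1"
    have t0: "1 \<le> t0" "Suc t0 = r" using inv False unfolding t0_def by auto
    obtain m' r' where e0: "epoch K d t0 = (m', r')" by (cases "epoch K d t0")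
    note inv0 = epoch_invariant[OF t0(1) e0]
    have "epoch K d (Suc t0) = (M, r)" using inv t0 assms(1) by auto
    moreover have "epoch K d (Suc t0) \<noteq> epoch K d t0" using calculation e0 inv0 t0 by auto
    ultimately have "M \<le> Suc m'" "\<not> stay_cond K d m' r' (Suc t0)"
      using epoch_Suc_cases[OF t0(1)] e0 by auto
    moreover have "1 \<le> r'" "r' \<le> Suc t0" "Suc t0 \<le> T" using inv0 inv t0 by auto
    ultimately have "3 * ((2 + sqrt 2) * sqrt (omega M)) \<le> 15 * regret_objective K d T b"
      using assms(2) by (intro sqrt_omega_restart_index_le)
    then show ?thesis unfolding eT fst_conv using nonneg by linarith
  qed
qed

end

context delayed_bandit
begin

lemma regret_le_objective:
  assumes "1 \<le> T" "0 < b"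
  shows "exp_regret K d l T
    \<le> 15 * regret_objective K d T b + (10 * (exp 1)\<^sup>2 * real K * ln (real K) + 5)"
proof -
  obtain a where a: "a \<in> {1..K}" and a_min: "(MIN a\<in>{1..K}. \<Sum>t=1..T. l t a) = (\<Sum>t=1..T. l t a)"
    using Min_in[of "(\<lambda>a. \<Sum>t=1..T. l t a) ` {1..K}"] K2 by fastforce
  have "exp_regret K d l T = (\<Sum>t\<in>{1..T}. expect T (\<lambda>xs. l t (xs ! (t - 1))) - l t a)"
    unfolding exp_regret_def exp_loss_eq_sum_expect a_min sum_subtractf ..
  also have "\<dots> \<le> 3 * (\<Sum>m\<le>fst (epoch K d T). sqrt (omega m))"
    using regret_le_sum_epochs[OF a] by (simp add: sum_distrib_left)
  also have "\<dots> \<le> 3 * ((2 + sqrt 2) * sqrt (omega (fst (epoch K d T))))"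
    using sum_sqrt_omega_le by simp
  also have "\<dots> \<le> 15 * regret_objective K d T b + (10 * (exp 1)\<^sup>2 * real K * ln (real K) + 5)"
    by (rule sqrt_omega_last_index_le[OF assms])
  finally show ?thesis .
qed

end

theorem theorem6:
  fixes K T :: nat and d :: "nat \<Rightarrow> nat" and l :: "nat \<Rightarrow> nat \<Rightarrow> real"
  assumes "K \<ge> 2" and "T \<ge> 1"
    and "\<And>t a. t \<in> {1..T} \<Longrightarrow> a \<in> {1..K} \<Longrightarrow> 0 \<le> l t a \<and> l t a \<le> 1"
  shows "exp_regret K d l T
    \<le> 15 * (INF \<beta>\<in>{0<..}. real (card (S_set d T \<beta>)) + 4 * exp 1 * \<beta> * ln (real K)
                 + (real K * real T + D_beta d T \<beta>) / (4 * exp 1 * \<beta>))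
      + 10 * (exp 1)^2 * real K * ln (real K) + 5"
proof -
  interpret delayed_bandit K d l T using assms by unfold_locales auto
  define C where "C = 10 * (exp 1)^2 * real K * ln (real K) + 5"
  have "(exp_regret K d l T - C) / 15 \<le> (INF \<beta>\<in>{0<..}. regret_objective K d T \<beta>)"
  proof (rule cINF_greatest)
    fix b :: real assume "b \<in> {0<..}"
    then have "exp_regret K d l T \<le> 15 * regret_objective K d T b + C"
      unfolding C_def by (intro regret_le_objective[OF assms(2)]) simp
    then show "(exp_regret K d l T - C) / 15 \<le> regret_objective K d T b" by simp
  qed simp
  then show ?thesis unfolding regret_objective_def C_def by simp
qed

end
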